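(* Let $q^N$ be probability distributions on $\mathbb{Z}$ satisfying assumptions (1)–(5) below, and let $X_k^N$ be a discrete-time random walk with jump distribution $q^N$ and $X_0^N=x_N\ge 2N^{5/6}$. Set $T_0=-1$ and for $m\ge0$ $$S_m=\inf\{k>T_m:|X_k^N|>2N^{5/6}\},\qquad T_{m+1}=\inf\{k>S_m:|X_k^N|<|X^N_{S_m}|-N^{5/6}\},$$ and $B_j=\sum_{m=0}^{j}(S_m-T_m)$. Then there is a constant $C$ such that for all large $N$, $$P\{B_{\lfloor N^{2/9}\rfloor}>2N^{17/18}\}\le CN^{-1/3}.$$
   Context: Assumptions: (1) $q^N(z)=q^N(-z)$; (2) $\sum_z z^2q^N(z)=\sigma_N^2N$ with $\sigma_N\to\sigma\in(0,\infty)$; (3) there is $h>0$ independent of $N$ with $q^N(z)\ge h/\sqrt N$ for $|z|\le N^{1/2}$; (4) $q^N(z)\le C\exp(-c|z|/\sqrt N)$ with $c,C>0$ independent of $N$; (5) $q^N(z)=0$ for $|z|>B\sqrt N\log N$ with $B$ independent of $N$. *)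

theory Defs
  imports "HOL-Probability.Probability"
begin

definition walk :: "int \<Rightarrow> (nat \<Rightarrow> int) \<Rightarrow> nat \<Rightarrow> int" where
  "walk x xi k = x + (\<Sum>i<k. xi i)"

definition S_time :: "nat \<Rightarrow> (nat \<Rightarrow> int) \<Rightarrow> ereal \<Rightarrow> ereal" where
  "S_time N X t = Inf {ereal (real k) | k. ereal (real k) > t \<and>
      real_of_int \<bar>X k\<bar> > 2 * real N powr (5/6)}"

primrec T_time :: "nat \<Rightarrow> (nat \<Rightarrow> int) \<Rightarrow> nat \<Rightarrow> ereal" where
  "T_time N X 0 = -1"
| "T_time N X (Suc m) =
     (let s = S_time N X (T_time N X m) in
      Inf {ereal (real k) | k. ereal (real k) > s \<and>
        real_of_int \<bar>X k\<bar> < real_of_int \<bar>X (nat \<lfloor>real_of_ereal s\<rfloor>)\<bar> - real N powr (5/6)})"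

definition B_sum :: "nat \<Rightarrow> (nat \<Rightarrow> int) \<Rightarrow> nat \<Rightarrow> ereal" where
  "B_sum N X j = (\<Sum>m\<le>j. S_time N X (T_time N X m) - T_time N X m)"

end

theory Submission
  imports Defs "HOL-Real_Asymp.Real_Asymp"
begin

text \<open>Almost surely every jump is at most \<open>B \<surd>N log N < N^(5/6)\<close>. Hence after \<open>S_m\<close>, where
  \<open>|X| > 2N^(5/6)\<close>, the walk can avoid dropping by \<open>N^(5/6)\<close> only by staying on one side of a
  level forever; a symmetric walk with positive variance crosses every level almost surely, so
  \<open>T_(m+1) < \<infinity>\<close> a.s. On the other hand \<open>S_m - T_m > \<tau>\<close> forces \<open>\<tau>\<close> steps inside
  \<open>[-2N^(5/6), 2N^(5/6)]\<close>; cut into \<open>r\<close> blocks of length \<open>L \<approx> N^(2/3) / \<sigma>\<^sup>2\<close>, each block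
  increment is then at most \<open>4N^(5/6)\<close>, which by a second/fourth moment bound has probability at
  most \<open>31/32\<close>, independently over blocks. A union bound over the \<open>N^(2/9)\<close> excursions gives
  \<open>N^(2/9) (31/32)\<^sup>r\<close> with \<open>r \<approx> N^(1/18)\<close>, far below \<open>N^(-1/3)\<close>.\<close>

definition psum :: "nat \<Rightarrow> (nat \<Rightarrow> int) \<Rightarrow> int" where
  "psum n \<omega> = (\<Sum>i<n. \<omega> i)"

lemma psum_comb_seq_le: "k \<le> i \<Longrightarrow> psum k (comb_seq i \<omega> \<omega>') = psum k \<omega>"
  unfolding psum_def by (intro sum.cong) (auto simp: comb_seq_def)

lemma psum_comb_seq_add: "psum (i + n) (comb_seq i \<omega> \<omega>') = psum i \<omega> + psum n \<omega>'"
proof (induction n)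
  case 0
  then show ?case using psum_comb_seq_le[of i i \<omega> \<omega>'] by (simp add: psum_def)
next
  case (Suc n)
  then show ?case by (simp add: psum_def comb_seq_def)
qed

lemma walk_eq_psum: "walk x \<omega> k = x + psum k \<omega>"
  by (simp add: walk_def psum_def)

lemma walk_comb_seq_le: "k \<le> i \<Longrightarrow> walk x (comb_seq i \<omega> \<omega>') k = walk x \<omega> k"
  by (simp add: walk_eq_psum psum_comb_seq_le)

lemma walk_comb_seq_add: "walk x (comb_seq i \<omega> \<omega>') (i + n) = walk x \<omega> i + psum n \<omega>'"
  by (simp add: walk_eq_psum psum_comb_seq_add)

primrec conv_pow :: "int pmf \<Rightarrow> nat \<Rightarrow> int pmf" where
  "conv_pow p 0 = return_pmf 0"
| "conv_pow p (Suc n) = bind_pmf (conv_pow p n) (\<lambda>w. map_pmf (\<lambda>s. w + s) p)"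

locale iid_steps =
  fixes p :: "int pmf"
begin

abbreviation Steps :: "(nat \<Rightarrow> int) measure" where
  "Steps \<equiv> PiM UNIV (\<lambda>_. measure_pmf p)"

sublocale steps: sequence_space "measure_pmf p"
  by unfold_locales

lemma space_Steps [simp]: "space Steps = UNIV"
  by (auto simp: space_PiM)

lemma emeasure_restart_le:
  assumes "{\<omega>\<in>space Steps. \<Phi> \<omega>} \<in> sets Steps" and A: "A \<in> sets Steps"
    and prefix: "\<And>\<omega> \<omega>'. \<Phi> (comb_seq i \<omega> \<omega>') \<Longrightarrow> \<omega> \<in> A"
    and suffix: "\<And>\<omega>. \<omega> \<in> A \<Longrightarrow> emeasure Steps {\<omega>'\<in>space Steps. \<Phi> (comb_seq i \<omega> \<omega>')} \<le> e"
  shows "emeasure Steps {\<omega>\<in>space Steps. \<Phi> \<omega>} \<le> e * emeasure Steps A"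
proof -
  let ?f = "\<lambda>(\<omega>, \<omega>'). comb_seq i \<omega> \<omega>'"
  let ?X = "?f -` {\<omega>\<in>space Steps. \<Phi> \<omega>} \<inter> space (Steps \<Otimes>\<^sub>M Steps)"
  have X: "?X \<in> sets (Steps \<Otimes>\<^sub>M Steps)"
    using measurable_sets[OF measurable_comb_seq assms(1)] .
  have "emeasure Steps {\<omega>\<in>space Steps. \<Phi> \<omega>}
      = emeasure (distr (Steps \<Otimes>\<^sub>M Steps) Steps ?f) {\<omega>\<in>space Steps. \<Phi> \<omega>}"
    using steps.PiM_comb_seq[of i] by simp
  also have "\<dots> = emeasure (Steps \<Otimes>\<^sub>M Steps) ?X"
    by (rule emeasure_distr[OF measurable_comb_seq assms(1)])
  also have "\<dots> = (\<integral>\<^sup>+\<omega>. emeasure Steps (Pair \<omega> -` ?X) \<partial>Steps)"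
    by (rule steps.emeasure_pair_measure_alt[OF X])
  also have "\<dots> \<le> (\<integral>\<^sup>+\<omega>. e * indicator A \<omega> \<partial>Steps)"
  proof (rule nn_integral_mono)
    fix \<omega>
    have eq: "Pair \<omega> -` ?X = {\<omega>'\<in>space Steps. \<Phi> (comb_seq i \<omega> \<omega>')}"
      by (auto simp: space_pair_measure)
    show "emeasure Steps (Pair \<omega> -` ?X) \<le> e * indicator A \<omega>"
    proof (cases "\<omega> \<in> A")
      case True
      then show ?thesis using suffix eq by simp
    next
      case False
      then have "Pair \<omega> -` ?X = {}" using prefix eq by auto
      then show ?thesis by simp
    qed
  qed
  also have "\<dots> = e * emeasure Steps A"
    using A by (simp add: nn_integral_cmult_indicator)
  finally show ?thesis .
qed

lemma psum_measurable [measurable]: "psum n \<in> measurable Steps (count_space UNIV)"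
proof (induction n)
  case 0
  then show ?case by (simp add: psum_def)
next
  case (Suc n)
  have eq: "psum (Suc n) = (\<lambda>\<omega>. (\<lambda>w \<omega>. w + \<omega> n) (psum n \<omega>) \<omega>)"
    by (auto simp: psum_def fun_eq_iff)
  have "(\<lambda>\<omega>. \<omega> n) \<in> measurable Steps (count_space UNIV)"
    using measurable_component_singleton[of n UNIV "\<lambda>_. measure_pmf p"] by simp
  then have "\<And>w. (\<lambda>\<omega>. w + \<omega> n) \<in> measurable Steps (count_space UNIV)"
    by (rule measurable_compose) simp
  then show ?case unfolding eq by (rule measurable_compose_countable[OF _ Suc])
qed

lemma psum_real_measurable [measurable]: "(\<lambda>\<omega>. real_of_int (psum n \<omega>)) \<in> borel_measurable Steps"
  using measurable_compose[OF psum_measurable, of real_of_int borel] by simp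

lemma walk_measurable [measurable]: "(\<lambda>\<omega>. walk x \<omega> k) \<in> measurable Steps (count_space UNIV)"
  unfolding walk_eq_psum using measurable_compose[OF psum_measurable, of "\<lambda>z. x + z"] by simp

lemma walk_real_measurable [measurable]: "(\<lambda>\<omega>. real_of_int (walk x \<omega> k)) \<in> borel_measurable Steps"
  unfolding walk_eq_psum by simp

lemma distr_psum: "distr Steps (count_space UNIV) (psum n) = measure_pmf (conv_pow p n)"
proof (induction n)
  case 0
  show ?case
    by (rule measure_eqI_countable[where A=UNIV])
      (auto simp: psum_def emeasure_distr steps.emeasure_space_1)
next
  case (Suc n)
  show ?case
  proof (rule measure_eqI_countable[where A=UNIV])
    fix z :: int
    let ?f = "\<lambda>(\<omega>, \<omega>'). comb_seq n \<omega> \<omega>'"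
    let ?B = "{\<omega>\<in>space Steps. psum (Suc n) \<omega> = z}"
    have B: "?B \<in> sets Steps" by measurable
    have "emeasure (distr Steps (count_space UNIV) (psum (Suc n))) {z} = emeasure Steps ?B"
      by (subst emeasure_distr) (auto intro!: arg_cong[where f="emeasure Steps"])
    also have "\<dots> = emeasure (distr (Steps \<Otimes>\<^sub>M Steps) Steps ?f) ?B"
      using steps.PiM_comb_seq[of n] by simp
    also have "\<dots> = emeasure (Steps \<Otimes>\<^sub>M Steps) (?f -` ?B \<inter> space (Steps \<Otimes>\<^sub>M Steps))"
      by (rule emeasure_distr[OF measurable_comb_seq B])
    also have "\<dots> = (\<integral>\<^sup>+\<omega>. emeasure Steps (Pair \<omega> -` (?f -` ?B \<inter> space (Steps \<Otimes>\<^sub>M Steps))) \<partial>Steps)"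
      by (rule steps.emeasure_pair_measure_alt) (rule measurable_sets[OF measurable_comb_seq B])
    also have "\<dots> = (\<integral>\<^sup>+\<omega>. ennreal (pmf p (z - psum n \<omega>)) \<partial>Steps)"
    proof (rule nn_integral_cong)
      fix \<omega>
      have "Pair \<omega> -` (?f -` ?B \<inter> space (Steps \<Otimes>\<^sub>M Steps))
          = {\<omega>'\<in>space Steps. \<omega>' 0 \<in> {z - psum n \<omega>}}"
        using psum_comb_seq_add[of n 1 \<omega>] by (auto simp: space_pair_measure psum_def)
      then show "emeasure Steps (Pair \<omega> -` (?f -` ?B \<inter> space (Steps \<Otimes>\<^sub>M Steps)))
          = ennreal (pmf p (z - psum n \<omega>))"
        using steps.emeasure_PiM_Collect_single[of 0 "{z - psum n \<omega>}"]
        by (simp add: emeasure_pmf_single)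
    qed
    also have "\<dots> = (\<integral>\<^sup>+w. ennreal (pmf p (z - w)) \<partial>distr Steps (count_space UNIV) (psum n))"
      by (subst nn_integral_distr) auto
    also have "\<dots> = pmf (conv_pow p (Suc n)) z"
    proof -
      have "\<And>w. pmf (map_pmf (\<lambda>s. w + s) p) z = pmf p (z - w)"
        using pmf_map_inj'[of "\<lambda>s. w + s" p "z - w" for w] by (simp add: inj_def)
      then show ?thesis using Suc by (simp add: ennreal_pmf_bind)
    qed
    finally show "emeasure (distr Steps (count_space UNIV) (psum (Suc n))) {z}
        = emeasure (measure_pmf (conv_pow p (Suc n))) {z}"
      by (simp add: emeasure_pmf_single)
  qed auto
qed

lemma emeasure_psum:
  "emeasure Steps {\<omega>\<in>space Steps. psum n \<omega> \<in> A} = emeasure (measure_pmf (conv_pow p n)) A"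
proof -
  have "emeasure Steps {\<omega>\<in>space Steps. psum n \<omega> \<in> A}
      = emeasure (distr Steps (count_space UNIV) (psum n)) A"
    by (subst emeasure_distr) (auto intro!: arg_cong[where f="emeasure Steps"])
  then show ?thesis by (simp add: distr_psum)
qed

definition block_incr :: "nat \<Rightarrow> nat \<Rightarrow> (nat \<Rightarrow> int) \<Rightarrow> int" where
  "block_incr L b \<omega> = psum (Suc b * L) \<omega> - psum (b * L) \<omega>"

lemma block_incr_measurable [measurable]:
  "(\<lambda>\<omega>. real_of_int (block_incr L b \<omega>)) \<in> borel_measurable Steps"
  unfolding block_incr_def by simp

lemma block_incr_comb_seq_0: "block_incr L 0 (comb_seq L \<omega> \<omega>') = psum L \<omega>"
  using psum_comb_seq_le[of L L \<omega> \<omega>'] by (simp add: block_incr_def psum_def)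

lemma block_incr_comb_seq_Suc: "block_incr L (Suc b) (comb_seq L \<omega> \<omega>') = block_incr L b \<omega>'"
  using psum_comb_seq_add[of L "Suc b * L" \<omega> \<omega>'] psum_comb_seq_add[of L "b * L" \<omega> \<omega>']
  by (simp add: block_incr_def algebra_simps)

lemma emeasure_block_incrs_le:
  "emeasure Steps {\<omega>\<in>space Steps. \<forall>b<r. \<bar>real_of_int (block_incr L b \<omega>)\<bar> \<le> c}
     \<le> emeasure Steps {\<omega>\<in>space Steps. \<bar>real_of_int (psum L \<omega>)\<bar> \<le> c} ^ r"
proof (induction r)
  case 0
  then show ?case by (simp add: steps.emeasure_space_1[simplified])
next
  case (Suc r)
  let ?A = "{\<omega>\<in>space Steps. \<bar>real_of_int (psum L \<omega>)\<bar> \<le> c}"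
  have "emeasure Steps {\<omega>\<in>space Steps. \<forall>b<Suc r. \<bar>real_of_int (block_incr L b \<omega>)\<bar> \<le> c}
     \<le> emeasure Steps ?A ^ r * emeasure Steps ?A"
  proof (rule emeasure_restart_le[where i=L])
    fix \<omega> \<omega>'
    assume "\<forall>b<Suc r. \<bar>real_of_int (block_incr L b (comb_seq L \<omega> \<omega>'))\<bar> \<le> c"
    then show "\<omega> \<in> ?A" using block_incr_comb_seq_0[of L \<omega> \<omega>'] by force
  next
    fix \<omega>
    have "emeasure Steps {\<omega>'\<in>space Steps. \<forall>b<Suc r. \<bar>real_of_int (block_incr L b (comb_seq L \<omega> \<omega>'))\<bar> \<le> c}
        \<le> emeasure Steps {\<omega>'\<in>space Steps. \<forall>b<r. \<bar>real_of_int (block_incr L b \<omega>')\<bar> \<le> c}"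
      using block_incr_comb_seq_Suc by (intro emeasure_mono) (fastforce, measurable)
    also have "\<dots> \<le> emeasure Steps ?A ^ r" by (rule Suc)
    finally show "emeasure Steps {\<omega>'\<in>space Steps. \<forall>b<Suc r.
        \<bar>real_of_int (block_incr L b (comb_seq L \<omega> \<omega>'))\<bar> \<le> c} \<le> emeasure Steps ?A ^ r" .
  qed measurable
  then show ?case by (simp add: mult.commute)
qed

end

lemma expectation_bind_pmf_finite:
  fixes g :: "'b \<Rightarrow> real"
  assumes "finite (set_pmf M)" "\<And>x. finite (set_pmf (f x))" "\<And>y. g y \<ge> 0"
  shows "measure_pmf.expectation (bind_pmf M f) g
       = measure_pmf.expectation M (\<lambda>x. measure_pmf.expectation (f x) g)"
proof -
  have fin: "finite (set_pmf (bind_pmf M f))" using assms by (simp add: set_bind_pmf)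
  have "ennreal (measure_pmf.expectation (bind_pmf M f) g) = (\<integral>\<^sup>+y. g y \<partial>bind_pmf M f)"
    by (rule nn_integral_eq_integral[symmetric])
      (auto intro: integrable_measure_pmf_finite[OF fin] assms)
  also have "\<dots> = (\<integral>\<^sup>+x. \<integral>\<^sup>+y. g y \<partial>f x \<partial>M)" by simp
  also have "\<dots> = (\<integral>\<^sup>+x. ennreal (measure_pmf.expectation (f x) g) \<partial>M)"
    by (intro nn_integral_cong nn_integral_eq_integral) (auto intro: integrable_measure_pmf_finite assms)
  also have "\<dots> = ennreal (measure_pmf.expectation M (\<lambda>x. measure_pmf.expectation (f x) g))"
    by (intro nn_integral_eq_integral)
      (auto intro!: integrable_measure_pmf_finite assms Bochner_Integration.integral_nonneg)
  finally show ?thesis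
    by (subst (asm) ennreal_inj) (auto intro!: Bochner_Integration.integral_nonneg assms)
qed

lemma square_le_tail_bound:
  fixes w V :: real
  assumes V: "V > 0"
  shows "w\<^sup>2 \<le> V / 4 + 8 * V * indicator {w. \<bar>w\<bar> > sqrt V / 2} w + w ^ 4 / (8 * V)"
proof -
  have quartic: "0 \<le> w ^ 4 / (8 * V)" using V by simp
  show ?thesis
  proof (cases "\<bar>w\<bar> > sqrt V / 2")
    case False
    then have "\<bar>w\<bar>\<^sup>2 \<le> (sqrt V / 2)\<^sup>2" by (intro power_mono) auto
    then have "w\<^sup>2 \<le> V / 4" using V by (simp add: power_divide)
    then show ?thesis using False quartic by simp
  next
    case True
    have "w\<^sup>2 \<le> 8 * V + w ^ 4 / (8 * V)"
    proof (cases "w\<^sup>2 \<le> 8 * V")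
      case False
      then have "w\<^sup>2 * (8 * V) \<le> w\<^sup>2 * w\<^sup>2" using V by (intro mult_left_mono) auto
      then have "w\<^sup>2 \<le> w ^ 4 / (8 * V)" using V by (simp add: field_simps power4_eq_xxxx power2_eq_square)
      then show ?thesis using V by linarith
    qed (use quartic in linarith)
    then show ?thesis using True V by simp
  qed
qed

lemma anticoncentration_fourth_moment:
  fixes P :: "int pmf"
  assumes fin: "finite (set_pmf P)"
    and var: "measure_pmf.expectation P (\<lambda>w. (real_of_int w)\<^sup>2) = V" and V: "V > 0"
    and fourth: "measure_pmf.expectation P (\<lambda>w. (real_of_int w) ^ 4) \<le> 4 * V\<^sup>2"
  shows "measure_pmf.prob P {w. \<bar>real_of_int w\<bar> > sqrt V / 2} \<ge> 1/32"
proof -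
  let ?A = "{w. \<bar>real_of_int w\<bar> > sqrt V / 2}"
  have int: "integrable (measure_pmf P) f" for f :: "int \<Rightarrow> real"
    by (rule integrable_measure_pmf_finite[OF fin])
  have "V = measure_pmf.expectation P (\<lambda>w. (real_of_int w)\<^sup>2)" using var by simp
  also have "\<dots> \<le> measure_pmf.expectation P
      (\<lambda>w. V / 4 + 8 * V * indicator ?A w + (real_of_int w) ^ 4 / (8 * V))"
    using square_le_tail_bound[OF V] by (intro integral_mono int) (simp add: indicator_def)
  also have "\<dots> = V / 4 + 8 * V * measure_pmf.prob P ?A
      + measure_pmf.expectation P (\<lambda>w. (real_of_int w) ^ 4) / (8 * V)"
    by (simp add: int)
  also have "\<dots> \<le> V / 4 + 8 * V * measure_pmf.prob P ?A + V / 2"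
    using fourth V by (simp add: field_simps power2_eq_square)
  finally have "V * (1/32) \<le> V * measure_pmf.prob P ?A" by simp
  then show ?thesis using V by (simp only: mult_le_cancel_left_pos)
qed

locale sym_finite_steps = iid_steps +
  assumes finite_support: "finite (set_pmf p)"
    and symmetric: "\<And>z. pmf p (- z) = pmf p z"
begin

definition mom2 :: real where "mom2 = measure_pmf.expectation p (\<lambda>z. (real_of_int z)\<^sup>2)"
definition mom4 :: real where "mom4 = measure_pmf.expectation p (\<lambda>z. (real_of_int z) ^ 4)"

lemma mom2_nonneg: "mom2 \<ge> 0"
  unfolding mom2_def by (simp add: Bochner_Integration.integral_nonneg)

lemma mom4_nonneg: "mom4 \<ge> 0"
  unfolding mom4_def by (simp add: Bochner_Integration.integral_nonneg)

lemma map_pmf_uminus_steps: "map_pmf uminus p = p"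
proof (rule pmf_eqI)
  fix z :: int
  have "pmf (map_pmf uminus p) (- (- z)) = pmf p (- z)" by (rule pmf_map_inj') (simp add: inj_def)
  then show "pmf (map_pmf uminus p) z = pmf p z" using symmetric by simp
qed

lemma expectation_odd_eq_0:
  assumes "\<And>z. f (- z) = - f z"
  shows "measure_pmf.expectation p (f :: int \<Rightarrow> real) = 0"
proof -
  have "measure_pmf.expectation p f = measure_pmf.expectation (map_pmf uminus p) f"
    by (simp add: map_pmf_uminus_steps)
  also have "\<dots> = - measure_pmf.expectation p f" using assms by simp
  finally show ?thesis by simp
qed

lemma integrable_steps: "integrable (measure_pmf p) (f :: int \<Rightarrow> real)"
  by (rule integrable_measure_pmf_finite[OF finite_support])

lemma finite_set_conv_pow: "finite (set_pmf (conv_pow p n))"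
  by (induction n) (auto simp: set_bind_pmf finite_support)

lemma integrable_conv_pow: "integrable (measure_pmf (conv_pow p n)) (f :: int \<Rightarrow> real)"
  by (rule integrable_measure_pmf_finite[OF finite_set_conv_pow])

lemma expectation_conv_pow_Suc:
  fixes g :: "int \<Rightarrow> real"
  assumes "\<And>y. g y \<ge> 0"
  shows "measure_pmf.expectation (conv_pow p (Suc n)) g =
    measure_pmf.expectation (conv_pow p n) (\<lambda>w. measure_pmf.expectation p (\<lambda>s. g (w + s)))"
  using expectation_bind_pmf_finite[of "conv_pow p n" "\<lambda>w. map_pmf (\<lambda>s. w + s) p" g]
    finite_set_conv_pow finite_support assms by simp

lemma mom2_conv_pow:
  "measure_pmf.expectation (conv_pow p n) (\<lambda>w. (real_of_int w)\<^sup>2) = real n * mom2"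
proof (induction n)
  case (Suc n)
  have step: "measure_pmf.expectation p (\<lambda>s. (real_of_int (w + s))\<^sup>2) = (real_of_int w)\<^sup>2 + mom2"
    for w
  proof -
    have "(\<lambda>s. (real_of_int (w + s))\<^sup>2)
        = (\<lambda>s. (real_of_int w)\<^sup>2 + (2 * real_of_int w * real_of_int s + (real_of_int s)\<^sup>2))"
      by (rule ext) (simp, algebra)
    moreover have "measure_pmf.expectation p real_of_int = 0" by (rule expectation_odd_eq_0) simp
    ultimately show ?thesis by (simp add: integrable_steps mom2_def)
  qed
  have "measure_pmf.expectation (conv_pow p (Suc n)) (\<lambda>w. (real_of_int w)\<^sup>2)
      = measure_pmf.expectation (conv_pow p n) (\<lambda>w. (real_of_int w)\<^sup>2 + mom2)"
    by (subst expectation_conv_pow_Suc) (simp_all only: step zero_le_power2)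
  then show ?case using Suc by (simp add: integrable_conv_pow algebra_simps)
qed simp

lemma mom4_conv_pow:
  "measure_pmf.expectation (conv_pow p n) (\<lambda>w. (real_of_int w) ^ 4)
     = real n * mom4 + 3 * real n * (real n - 1) * mom2\<^sup>2"
proof (induction n)
  case (Suc n)
  have step: "measure_pmf.expectation p (\<lambda>s. (real_of_int (w + s)) ^ 4)
      = (real_of_int w) ^ 4 + 6 * mom2 * (real_of_int w)\<^sup>2 + mom4" for w
  proof -
    have "(\<lambda>s. (real_of_int (w + s)) ^ 4) = (\<lambda>s. (real_of_int w) ^ 4
        + (4 * (real_of_int w) ^ 3 * real_of_int s + (6 * (real_of_int w)\<^sup>2 * (real_of_int s)\<^sup>2
        + (4 * real_of_int w * (real_of_int s) ^ 3 + (real_of_int s) ^ 4))))"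
      by (rule ext) (simp, algebra)
    moreover have "measure_pmf.expectation p real_of_int = 0"
      and "measure_pmf.expectation p (\<lambda>s. (real_of_int s) ^ 3) = 0"
      by (rule expectation_odd_eq_0, simp)+
    ultimately show ?thesis by (simp add: integrable_steps mom2_def mom4_def)
  qed
  have "measure_pmf.expectation (conv_pow p (Suc n)) (\<lambda>w. (real_of_int w) ^ 4)
      = measure_pmf.expectation (conv_pow p n)
          (\<lambda>w. (real_of_int w) ^ 4 + 6 * mom2 * (real_of_int w)\<^sup>2 + mom4)"
    by (subst expectation_conv_pow_Suc) (simp_all only: step zero_le_even_power even_numeral)
  also have "\<dots> = measure_pmf.expectation (conv_pow p n) (\<lambda>w. (real_of_int w) ^ 4)
      + 6 * mom2 * measure_pmf.expectation (conv_pow p n) (\<lambda>w. (real_of_int w)\<^sup>2) + mom4"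
    by (simp add: integrable_conv_pow)
  also have "\<dots> = real (Suc n) * mom4 + 3 * real (Suc n) * (real (Suc n) - 1) * mom2\<^sup>2"
    using Suc mom2_conv_pow[of n] by (simp add: algebra_simps power2_eq_square)
  finally show ?case .
qed simp

lemma map_pmf_uminus_conv_pow: "map_pmf uminus (conv_pow p n) = conv_pow p n"
proof (induction n)
  case (Suc n)
  have "map_pmf uminus (conv_pow p (Suc n)) = bind_pmf (conv_pow p n) (\<lambda>w. map_pmf (\<lambda>s. - w - s) p)"
    by (simp add: map_bind_pmf map_pmf_comp)
  also have "\<dots> = bind_pmf (conv_pow p n) (\<lambda>w. map_pmf (\<lambda>s. - w + s) (map_pmf uminus p))"
    unfolding map_pmf_comp by (intro bind_pmf_cong map_pmf_cong) auto
  also have "\<dots> = bind_pmf (map_pmf uminus (conv_pow p n)) (\<lambda>w. map_pmf (\<lambda>s. w + s) p)"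
    by (auto simp: map_pmf_uminus_steps bind_map_pmf intro!: bind_pmf_cong map_pmf_cong)
  finally show ?case using Suc by simp
qed simp

lemma mom4_conv_pow_le:
  assumes "real n * mom4 \<le> (real n * mom2)\<^sup>2"
  shows "measure_pmf.expectation (conv_pow p n) (\<lambda>w. (real_of_int w) ^ 4) \<le> 4 * (real n * mom2)\<^sup>2"
proof -
  have "3 * real n * (real n - 1) * mom2\<^sup>2 \<le> 3 * (real n * mom2)\<^sup>2"
    using mom2_nonneg by (simp add: power2_eq_square mult_right_mono algebra_simps)
  then show ?thesis using assms by (simp add: mom4_conv_pow)
qed

lemma conv_pow_anticoncentration:
  assumes "real n * mom2 > 0" and "real n * mom4 \<le> (real n * mom2)\<^sup>2"
  shows "measure_pmf.prob (conv_pow p n) {w. \<bar>real_of_int w\<bar> > sqrt (real n * mom2) / 2} \<ge> 1/32"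
  using assms
  by (intro anticoncentration_fourth_moment finite_set_conv_pow mom2_conv_pow mom4_conv_pow_le)

lemma conv_pow_tails_ge:
  assumes V: "real n * mom2 > 0" and fourth: "real n * mom4 \<le> (real n * mom2)\<^sup>2"
  defines "t \<equiv> sqrt (real n * mom2) / 2"
  shows "measure_pmf.prob (conv_pow p n) {w. real_of_int w < - t} \<ge> 1/64"
    and "measure_pmf.prob (conv_pow p n) {w. real_of_int w > t} \<ge> 1/64"
proof -
  let ?P = "measure_pmf.prob (conv_pow p n)"
  have mirror: "?P {w. real_of_int w < - t} = ?P {w. real_of_int w > t}"
  proof -
    have "?P {w. real_of_int w < - t}
        = measure_pmf.prob (map_pmf uminus (conv_pow p n)) {w. real_of_int w < - t}"
      by (simp add: map_pmf_uminus_conv_pow)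
    then show ?thesis by (simp add: vimage_def)
  qed
  have t: "t \<ge> 0" using V by (simp add: t_def)
  have "1/32 \<le> ?P {w. \<bar>real_of_int w\<bar> > t}"
    unfolding t_def by (rule conv_pow_anticoncentration[OF V fourth])
  also have "{w. \<bar>real_of_int w\<bar> > t} = {w. real_of_int w < - t} \<union> {w. real_of_int w > t}" by auto
  also have "?P \<dots> = ?P {w. real_of_int w < - t} + ?P {w. real_of_int w > t}"
    using t by (intro measure_pmf.finite_measure_Union) auto
  finally show "?P {w. real_of_int w > t} \<ge> 1/64" using mirror by simp
  then show "?P {w. real_of_int w < - t} \<ge> 1/64" using mirror by simp
qed

end

lemma ennreal_eq_0_if_le_mult:
  assumes "x \<le> x * ennreal c" and "x \<noteq> \<top>" and "c < 1"
  shows "x = 0"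
proof -
  obtain r where r: "x = ennreal r" "r \<ge> 0" using assms(2) by (cases x) auto
  have "ennreal r \<le> ennreal (r * max c 0)"
    using assms(1) r by (simp add: ennreal_mult' ennreal_max_0 mult.commute)
  then have "r \<le> r * max c 0" using r(2) by (simp add: ennreal_le_iff)
  have "r = 0"
  proof (rule ccontr)
    assume "r \<noteq> 0"
    then have "r * max c 0 < r" using r(2) assms(3) by (simp add: mult_less_cancel_left1)
    with \<open>r \<le> r * max c 0\<close> show False by simp
  qed
  then show ?thesis using r by simp
qed

context sym_finite_steps
begin

lemma exists_escape_time:
  assumes pos: "mom2 > 0" and sg: "sg = 1 \<or> sg = -1" and y: "y \<ge> 0"
  shows "\<exists>l. emeasure Steps {\<omega>\<in>space Steps. 0 \<le> y + sg * real_of_int (psum l \<omega>)} \<le> ennreal (63/64)"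
proof -
  define l where "l = nat \<lceil>mom4 / mom2\<^sup>2 + 4 * y\<^sup>2 / mom2\<rceil> + 1"
  have l_ge: "real l \<ge> mom4 / mom2\<^sup>2 + 4 * y\<^sup>2 / mom2" and l_pos: "real l > 0"
    unfolding l_def by linarith+
  have "mom4 / mom2\<^sup>2 \<le> real l"
    using l_ge pos y by (smt (verit) divide_nonneg_pos zero_le_power2)
  then have "mom4 \<le> real l * mom2\<^sup>2" using pos by (simp add: field_simps)
  then have "real l * mom4 \<le> real l * (real l * mom2\<^sup>2)" using l_pos by (intro mult_left_mono) auto
  then have fourth: "real l * mom4 \<le> (real l * mom2)\<^sup>2" by (simp add: power2_eq_square mult_ac)
  have "4 * y\<^sup>2 / mom2 \<le> real l"
    using l_ge divide_nonneg_nonneg[OF mom4_nonneg zero_le_power2[of mom2]] by linarith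
  then have "4 * y\<^sup>2 \<le> real l * mom2" using pos by (simp add: field_simps)
  then have "sqrt (4 * y\<^sup>2) \<le> sqrt (real l * mom2)" by simp
  then have y_le: "y \<le> sqrt (real l * mom2) / 2" using y by (simp add: real_sqrt_mult)
  have V: "real l * mom2 > 0" using l_pos pos by simp
  define A where "A = {w::int. 0 \<le> y + sg * real_of_int w}"
  have "measure_pmf.prob (conv_pow p l) (UNIV - A) \<ge> 1/64"
  proof (cases "sg = 1")
    case True
    then have "{w. real_of_int w < - (sqrt (real l * mom2) / 2)} \<subseteq> UNIV - A"
      using y_le by (auto simp: A_def)
    then have "measure_pmf.prob (conv_pow p l) {w. real_of_int w < - (sqrt (real l * mom2) / 2)}
        \<le> measure_pmf.prob (conv_pow p l) (UNIV - A)"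
      by (rule measure_pmf.finite_measure_mono) simp
    then show ?thesis using conv_pow_tails_ge(1)[OF V fourth] by linarith
  next
    case False
    then have "{w. real_of_int w > sqrt (real l * mom2) / 2} \<subseteq> UNIV - A"
      using y_le sg by (auto simp: A_def)
    then have "measure_pmf.prob (conv_pow p l) {w. real_of_int w > sqrt (real l * mom2) / 2}
        \<le> measure_pmf.prob (conv_pow p l) (UNIV - A)"
      by (rule measure_pmf.finite_measure_mono) simp
    then show ?thesis using conv_pow_tails_ge(2)[OF V fourth] by linarith
  qed
  then have "measure_pmf.prob (conv_pow p l) A \<le> 63/64"
    using measure_pmf.prob_compl[of A "conv_pow p l"] by (simp add: Compl_eq_Diff_UNIV)
  moreover have "emeasure Steps {\<omega>\<in>space Steps. 0 \<le> y + sg * real_of_int (psum l \<omega>)}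
      = measure_pmf.prob (conv_pow p l) A"
    using emeasure_psum[of l A] by (simp add: A_def measure_pmf.emeasure_eq_measure)
  ultimately show ?thesis by (intro exI[of _ l]) (simp add: ennreal_leI)
qed

text \<open>The probability of never crossing a level, maximised over all levels, is reduced by the
  factor \<open>63/64\<close> on restarting at an escape time, hence it vanishes.\<close>
lemma emeasure_never_crosses_eq_0:
  assumes pos: "mom2 > 0" and sg: "sg = 1 \<or> sg = -1"
  shows "emeasure Steps {\<omega>\<in>space Steps. \<forall>n. 0 \<le> y + sg * real_of_int (psum n \<omega>)} = 0"
proof -
  define \<rho> where "\<rho> y = emeasure Steps {\<omega>\<in>space Steps. \<forall>n. 0 \<le> y + sg * real_of_int (psum n \<omega>)}"
    for y
  define R where "R = (SUP y. \<rho> y)"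
  have meas: "{\<omega>\<in>space Steps. \<forall>n. 0 \<le> y + sg * real_of_int (psum n \<omega>)} \<in> sets Steps" for y
    by measurable
  have \<rho>_le: "\<rho> y \<le> R" for y unfolding R_def by (rule SUP_upper) simp
  have "R \<le> 1" unfolding R_def \<rho>_def by (rule SUP_least) (rule steps.measure_le_1[simplified])
  then have R_fin: "R \<noteq> \<top>" by (auto simp: top_unique)
  have "\<rho> y \<le> R * ennreal (63/64)" for y
  proof (cases "y < 0")
    case True
    then have "{\<omega>\<in>space Steps. \<forall>n. 0 \<le> y + sg * real_of_int (psum n \<omega>)} = {}"
      by (auto intro!: exI[of _ 0] simp: psum_def)
    then show ?thesis unfolding \<rho>_def by (simp only: emeasure_empty zero_le)
  next
    case False
    then obtain l where l: "emeasure Steps {\<omega>\<in>space Steps. 0 \<le> y + sg * real_of_int (psum l \<omega>)}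
        \<le> ennreal (63/64)"
      using exists_escape_time[OF pos sg] by force
    let ?A = "{\<omega>\<in>space Steps. 0 \<le> y + sg * real_of_int (psum l \<omega>)}"
    have "\<rho> y \<le> R * emeasure Steps ?A"
      unfolding \<rho>_def
    proof (rule emeasure_restart_le[where i=l])
      fix \<omega> \<omega>' assume "\<forall>n. 0 \<le> y + sg * real_of_int (psum n (comb_seq l \<omega> \<omega>'))"
      then show "\<omega> \<in> ?A" using psum_comb_seq_le[of l l \<omega> \<omega>'] by (auto dest: spec[of _ l])
    next
      fix \<omega>
      let ?y = "y + sg * real_of_int (psum l \<omega>)"
      have "{\<omega>'\<in>space Steps. \<forall>n. 0 \<le> y + sg * real_of_int (psum n (comb_seq l \<omega> \<omega>'))}
          \<subseteq> {\<omega>'\<in>space Steps. \<forall>n. 0 \<le> ?y + sg * real_of_int (psum n \<omega>')}"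
      proof safe
        fix \<omega>' n assume "\<forall>n. 0 \<le> y + sg * real_of_int (psum n (comb_seq l \<omega> \<omega>'))"
        then have "0 \<le> y + sg * real_of_int (psum (l + n) (comb_seq l \<omega> \<omega>'))" by blast
        then show "0 \<le> ?y + sg * real_of_int (psum n \<omega>')" by (simp add: psum_comb_seq_add algebra_simps)
      qed
      then have "emeasure Steps {\<omega>'\<in>space Steps. \<forall>n. 0 \<le> y + sg * real_of_int (psum n (comb_seq l \<omega> \<omega>'))}
          \<le> \<rho> ?y"
        unfolding \<rho>_def by (intro emeasure_mono meas)
      also have "\<dots> \<le> R" by (rule \<rho>_le)
      finally show "emeasure Steps {\<omega>'\<in>space Steps.
          \<forall>n. 0 \<le> y + sg * real_of_int (psum n (comb_seq l \<omega> \<omega>'))} \<le> R" .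
    qed (use meas in measurable)
    also have "\<dots> \<le> R * ennreal (63/64)" using l by (intro mult_left_mono) auto
    finally show ?thesis .
  qed
  then have "R \<le> R * ennreal (63/64)" unfolding R_def by (intro SUP_least) (simp add: R_def)
  then have "R = 0" using R_fin by (rule ennreal_eq_0_if_le_mult) simp
  then show ?thesis using \<rho>_le[of y] by (simp add: \<rho>_def)
qed

end

lemma Inf_ereal_nat_eq_Least:
  "Inf {ereal (real k) | k. P k} = (if \<exists>k. P k then ereal (real (LEAST k. P k)) else \<infinity>)"
proof (cases "\<exists>k. P k")
  case True
  show ?thesis
  proof (simp only: True if_True, rule Inf_eqI)
    fix i assume "i \<in> {ereal (real k) | k. P k}"
    then obtain k where "i = ereal (real k)" "P k" by auto
    then show "ereal (real (LEAST k. P k)) \<le> i" by (simp add: Least_le)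
  next
    fix y assume "\<And>i. i \<in> {ereal (real k) | k. P k} \<Longrightarrow> y \<le> i"
    moreover have "ereal (real (LEAST k. P k)) \<in> {ereal (real k) | k. P k}"
      using True by (auto intro: LeastI_ex)
    ultimately show "y \<le> ereal (real (LEAST k. P k))" by blast
  qed
qed (simp add: top_ereal_def)

lemma Least_cong_prefix:
  fixes P P' :: "nat \<Rightarrow> bool"
  assumes agree: "\<And>k. k \<le> n \<Longrightarrow> P k = P' k" and ex: "\<exists>k. P k" and le: "(LEAST k. P k) \<le> n"
  shows "(\<exists>k. P' k) \<and> (LEAST k. P' k) = (LEAST k. P k)"
proof -
  let ?k = "LEAST k. P k"
  have "P ?k" using ex by (rule LeastI_ex)
  then have P': "P' ?k" using agree le by simp
  have "\<And>k. k < ?k \<Longrightarrow> \<not> P' k"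
    using agree le not_less_Least by (metis less_imp_le order.trans)
  then have "(LEAST k. P' k) = ?k" using P' by (intro Least_equality) (auto simp: not_less[symmetric])
  then show ?thesis using P' by auto
qed

abbreviation scale :: "nat \<Rightarrow> real" where
  "scale N \<equiv> real N powr (5/6)"

lemma S_time_eq: "S_time N X t = (if \<exists>k. t < ereal (real k) \<and> 2 * scale N < real_of_int \<bar>X k\<bar>
   then ereal (real (LEAST k. t < ereal (real k) \<and> 2 * scale N < real_of_int \<bar>X k\<bar>)) else \<infinity>)"
  unfolding S_time_def by (rule Inf_ereal_nat_eq_Least)

lemma T_time_Suc_eq: "T_time N X (Suc m) = (let s = S_time N X (T_time N X m) in
   if \<exists>k. s < ereal (real k) \<and> real_of_int \<bar>X k\<bar> < real_of_int \<bar>X (nat \<lfloor>real_of_ereal s\<rfloor>)\<bar> - scale N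
   then ereal (real (LEAST k. s < ereal (real k)
     \<and> real_of_int \<bar>X k\<bar> < real_of_int \<bar>X (nat \<lfloor>real_of_ereal s\<rfloor>)\<bar> - scale N))
   else \<infinity>)"
  unfolding T_time.simps Let_def by (rule Inf_ereal_nat_eq_Least)

lemma S_time_finiteD:
  assumes "S_time N X t \<noteq> \<infinity>"
  obtains s where "S_time N X t = ereal (real s)" "2 * scale N < real_of_int \<bar>X s\<bar>" "t < ereal (real s)"
proof -
  let ?P = "\<lambda>k. t < ereal (real k) \<and> 2 * scale N < real_of_int \<bar>X k\<bar>"
  have ex: "\<exists>k. ?P k" using assms by (auto simp: S_time_eq split: if_splits)
  then have "?P (LEAST k. ?P k)" by (rule LeastI_ex)
  moreover have "S_time N X t = ereal (real (LEAST k. ?P k))" using ex by (simp add: S_time_eq)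
  ultimately show ?thesis using that by blast
qed

lemma S_time_gt: "S_time N X t \<noteq> \<infinity> \<Longrightarrow> t < S_time N X t"
  by (erule S_time_finiteD) simp

lemma T_time_Suc_gt:
  assumes "T_time N X (Suc m) \<noteq> \<infinity>"
  shows "S_time N X (T_time N X m) < T_time N X (Suc m)"
proof -
  let ?s = "S_time N X (T_time N X m)"
  let ?P = "\<lambda>k. ?s < ereal (real k)
    \<and> real_of_int \<bar>X k\<bar> < real_of_int \<bar>X (nat \<lfloor>real_of_ereal ?s\<rfloor>)\<bar> - scale N"
  have ex: "\<exists>k. ?P k" using assms unfolding T_time_Suc_eq Let_def by (auto split: if_splits)
  then have "?P (LEAST k. ?P k)" by (rule LeastI_ex)
  moreover have "T_time N X (Suc m) = ereal (real (LEAST k. ?P k))"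
    using ex unfolding T_time_Suc_eq Let_def by simp
  ultimately show ?thesis by simp
qed

lemma S_time_cong_prefix:
  assumes agree: "\<And>k. k \<le> n \<Longrightarrow> X k = X' k" and le: "S_time N X t \<le> ereal (real n)"
  shows "S_time N X' t = S_time N X t"
proof -
  let ?P = "\<lambda>X k. t < ereal (real k) \<and> 2 * scale N < real_of_int \<bar>X k\<bar>"
  have ex: "\<exists>k. ?P X k" using le by (auto simp: S_time_eq split: if_splits)
  then have "(LEAST k. ?P X k) \<le> n" using le by (simp add: S_time_eq)
  from Least_cong_prefix[of n "?P X" "?P X'", OF _ ex this] agree
  show ?thesis using ex by (simp add: S_time_eq)
qed

lemma T_time_cong_prefix:
  assumes agree: "\<And>k. k \<le> n \<Longrightarrow> X k = X' k"
  shows "T_time N X m \<le> ereal (real n) \<Longrightarrow> T_time N X' m = T_time N X m"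
proof (induction m)
  case (Suc m)
  let ?s = "S_time N X (T_time N X m)"
  have fin: "T_time N X (Suc m) \<noteq> \<infinity>" using Suc.prems by auto
  have "?s < T_time N X (Suc m)" by (rule T_time_Suc_gt[OF fin])
  then have sle: "?s \<le> ereal (real n)" using Suc.prems by simp
  then have sfin: "?s \<noteq> \<infinity>" by auto
  have "T_time N X m < ?s" by (rule S_time_gt[OF sfin])
  then have "T_time N X m \<le> ereal (real n)" using sle by simp
  then have teq: "T_time N X' m = T_time N X m" by (rule Suc.IH)
  have seq: "S_time N X' (T_time N X' m) = ?s" unfolding teq by (rule S_time_cong_prefix[OF agree sle])
  obtain s0 where s0: "?s = ereal (real s0)" by (rule S_time_finiteD[OF sfin])
  have s0n: "s0 \<le> n" using sle s0 by simp
  let ?P = "\<lambda>X k. ereal (real s0) < ereal (real k) \<and> real_of_int \<bar>X k\<bar> < real_of_int \<bar>X s0\<bar> - scale N"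
  have ex: "\<exists>k. ?P X k" using fin unfolding T_time_Suc_eq Let_def s0 by (auto split: if_splits)
  have le: "(LEAST k. ?P X k) \<le> n" using Suc.prems ex unfolding T_time_Suc_eq Let_def s0 by simp
  have ag: "\<And>k. k \<le> n \<Longrightarrow> ?P X k = ?P X' k" using agree s0n by simp
  from Least_cong_prefix[of n "?P X" "?P X'", OF ag ex le]
  show ?case using ex unfolding T_time_Suc_eq Let_def seq s0 by simp
qed simp

lemma S_T_time_cong_prefix:
  assumes agree: "\<And>k. k \<le> n \<Longrightarrow> X k = X' k"
    and le: "S_time N X (T_time N X m) \<le> ereal (real n)"
  shows "S_time N X' (T_time N X' m) = S_time N X (T_time N X m)"
proof -
  have "S_time N X (T_time N X m) \<noteq> \<infinity>" using le by auto
  then have "T_time N X m < S_time N X (T_time N X m)" by (rule S_time_gt)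
  then have "T_time N X m \<le> ereal (real n)" using le by (meson less_imp_le order.trans)
  then have "T_time N X' m = T_time N X m" using T_time_cong_prefix[of n X X' N m] agree by blast
  then show ?thesis using S_time_cong_prefix[OF agree le] by simp
qed

text \<open>\<open>T_time N X m = i - 1\<close> says that the search for \<open>S_m\<close> starts at time \<open>i\<close>; this covers
  \<open>T_0 = -1\<close> as well.\<close>
definition exits_within :: "nat \<Rightarrow> nat \<Rightarrow> (nat \<Rightarrow> int) \<Rightarrow> nat \<Rightarrow> bool" where
  "exits_within N \<tau> X m \<longleftrightarrow> (\<forall>i. T_time N X m = ereal (real i) - 1 \<longrightarrow>
      (\<exists>n<\<tau>. 2 * scale N < real_of_int \<bar>X (i + n)\<bar>))"

definition dips_after :: "nat \<Rightarrow> (nat \<Rightarrow> int) \<Rightarrow> nat \<Rightarrow> bool" where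
  "dips_after N X m \<longleftrightarrow> (\<forall>s. S_time N X (T_time N X m) = ereal (real s) \<longrightarrow>
      (\<exists>k. s < k \<and> real_of_int \<bar>X k\<bar> < real_of_int \<bar>X s\<bar> - scale N))"

lemma S_time_finite_if_exits_within:
  assumes T: "T_time N X m = ereal (real i) - 1" and exits: "exits_within N \<tau> X m"
  obtains s where "S_time N X (T_time N X m) = ereal (real s)"
    and "S_time N X (T_time N X m) - T_time N X m \<le> ereal (real \<tau>)"
proof -
  obtain n where n: "n < \<tau>" "2 * scale N < real_of_int \<bar>X (i + n)\<bar>"
    using exits T unfolding exits_within_def by blast
  let ?P = "\<lambda>k. T_time N X m < ereal (real k) \<and> 2 * scale N < real_of_int \<bar>X k\<bar>"
  have P: "?P (i + n)" using n T by (simp add: one_ereal_def)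
  then have "\<exists>k. ?P k" by blast
  then have S: "S_time N X (T_time N X m) = ereal (real (LEAST k. ?P k))"
    by (simp add: S_time_eq)
  have "ereal (real (LEAST k. ?P k)) - (ereal (real i) - 1) = ereal (real (LEAST k. ?P k) - real i + 1)"
    by (simp add: one_ereal_def)
  also have "\<dots> \<le> ereal (real \<tau>)" using Least_le[of ?P, OF P] n(1) by simp
  finally show ?thesis using S T that by auto
qed

lemma T_time_Suc_finite_if_dips_after:
  assumes S: "S_time N X (T_time N X m) = ereal (real s)" and dips: "dips_after N X m"
  obtains i where "T_time N X (Suc m) = ereal (real i) - 1"
proof -
  let ?P = "\<lambda>k. ereal (real s) < ereal (real k) \<and> real_of_int \<bar>X k\<bar> < real_of_int \<bar>X s\<bar> - scale N"
  have "\<exists>k. ?P k" using dips S unfolding dips_after_def by auto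
  then have "T_time N X (Suc m) = ereal (real (LEAST k. ?P k))"
    unfolding T_time_Suc_eq Let_def S by simp
  then have "T_time N X (Suc m) = ereal (real (Suc (LEAST k. ?P k))) - 1"
    by (simp add: one_ereal_def del: T_time.simps)
  then show ?thesis using that by blast
qed

lemma B_sum_le_if_exits_within_dips_after:
  assumes H: "\<And>m. m \<le> j \<Longrightarrow> exits_within N \<tau> X m \<and> dips_after N X m"
  shows "B_sum N X j \<le> ereal (real (Suc j) * real \<tau>)"
proof -
  have T_fin: "m \<le> j \<Longrightarrow> \<exists>i. T_time N X m = ereal (real i) - 1" for m
  proof (induction m)
    case 0
    then show ?case by (intro exI[of _ 0]) (simp add: one_ereal_def zero_ereal_def[symmetric])
  next
    case (Suc m)
    then obtain i where i: "T_time N X m = ereal (real i) - 1" by auto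
    have "m \<le> j" using Suc.prems by simp
    then have "exits_within N \<tau> X m" "dips_after N X m" using H by auto
    then obtain s where "S_time N X (T_time N X m) = ereal (real s)"
      using S_time_finite_if_exits_within[OF i] by metis
    then show ?case using T_time_Suc_finite_if_dips_after \<open>dips_after N X m\<close> by metis
  qed
  have "B_sum N X j \<le> (\<Sum>m\<le>j. ereal (real \<tau>))"
    unfolding B_sum_def
  proof (rule sum_mono)
    fix m assume "m \<in> {..j}"
    then obtain i where "T_time N X m = ereal (real i) - 1" and "exits_within N \<tau> X m"
      using T_fin H by auto
    then show "S_time N X (T_time N X m) - T_time N X m \<le> ereal (real \<tau>)"
      by (rule S_time_finite_if_exits_within)
  qed
  then show ?thesis by simp
qed

lemma stays_above_if_no_dip:
  fixes X :: "nat \<Rightarrow> real" and a J :: real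
  assumes jumps: "\<And>k. \<bar>X (Suc k) - X k\<bar> \<le> J" and J: "J \<le> 2 * a" and a: "a \<ge> 0"
    and high: "2 * a < X s" and no_dip: "\<And>k. s < k \<Longrightarrow> X s - a \<le> \<bar>X k\<bar>"
  shows "X s - a \<le> X (s + n)"
proof (induction n)
  case (Suc n)
  have "X (s + Suc n) \<ge> X (s + n) - J" using jumps[of "s + n"] by simp
  then have "X (s + Suc n) > - (X s - a)" using Suc J high by simp
  moreover have "X s - a \<le> \<bar>X (s + Suc n)\<bar>" using no_dip[of "s + Suc n"] by simp
  ultimately show ?case by (simp add: abs_if split: if_splits)
qed (use a in simp)

lemma walk_one_sided_if_no_dip:
  fixes a J :: real
  assumes jumps: "\<And>i. \<bar>real_of_int (\<omega> i)\<bar> \<le> J" and J: "J \<le> 2 * a" and a: "a \<ge> 0"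
    and high: "2 * a < real_of_int \<bar>walk x \<omega> s\<bar>"
    and no_dip: "\<And>k. s < k \<Longrightarrow> real_of_int \<bar>walk x \<omega> s\<bar> - a \<le> real_of_int \<bar>walk x \<omega> k\<bar>"
  obtains sg :: real where "sg = 1 \<or> sg = -1"
    and "\<And>n. 0 \<le> a + sg * real_of_int (walk x \<omega> (s + n) - walk x \<omega> s)"
proof -
  have steps: "\<bar>real_of_int (walk x \<omega> (Suc k)) - real_of_int (walk x \<omega> k)\<bar> \<le> J" for k
    using jumps by (simp add: walk_def)
  show ?thesis
  proof (cases "walk x \<omega> s > 0")
    case True
    have "real_of_int (walk x \<omega> s) - a \<le> real_of_int (walk x \<omega> (s + n))" for n
      using steps True high no_dip by (intro stays_above_if_no_dip[where J=J]) (auto simp: J a)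
    then show ?thesis by (intro that[of 1]) (simp_all add: algebra_simps)
  next
    case False
    have "- real_of_int (walk x \<omega> s) - a \<le> - real_of_int (walk x \<omega> (s + n))" for n
      using steps False high no_dip
      by (intro stays_above_if_no_dip[where J=J and X="\<lambda>k. - real_of_int (walk x \<omega> k)"])
        (auto simp: J a abs_minus_commute)
    then show ?thesis by (intro that[of "-1"]) (simp_all add: algebra_simps)
  qed
qed

context iid_steps
begin

lemma S_time_walk_measurable:
  assumes [measurable]: "t \<in> borel_measurable Steps"
  shows "(\<lambda>\<omega>. S_time N (walk x \<omega>) (t \<omega>)) \<in> borel_measurable Steps"
proof -
  have [measurable]: "(\<lambda>\<omega>. LEAST k. t \<omega> < ereal (real k) \<and> 2 * scale N < real_of_int \<bar>walk x \<omega> k\<bar>)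
      \<in> measurable Steps (count_space UNIV)"
    by measurable
  show ?thesis unfolding S_time_eq by measurable
qed

lemma T_time_S_time_walk_measurable:
  "(\<lambda>\<omega>. T_time N (walk x \<omega>) m) \<in> borel_measurable Steps \<and>
   (\<lambda>\<omega>. S_time N (walk x \<omega>) (T_time N (walk x \<omega>) m)) \<in> borel_measurable Steps"
proof (induction m)
  case 0
  then show ?case using S_time_walk_measurable[of "\<lambda>_. -1"] by simp
next
  case (Suc m)
  let ?s = "\<lambda>\<omega>. S_time N (walk x \<omega>) (T_time N (walk x \<omega>) m)"
  have [measurable]: "?s \<in> borel_measurable Steps" using Suc by simp
  have [measurable]: "(\<lambda>\<omega>. nat \<lfloor>real_of_ereal (?s \<omega>)\<rfloor>) \<in> measurable Steps (count_space UNIV)"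
    by measurable
  have [measurable]: "(\<lambda>\<omega>. real_of_int (walk x \<omega> (nat \<lfloor>real_of_ereal (?s \<omega>)\<rfloor>))) \<in> borel_measurable Steps"
    by (rule measurable_compose_countable[OF walk_real_measurable]) measurable
  have [measurable]: "(\<lambda>\<omega>. LEAST k. ?s \<omega> < ereal (real k) \<and> real_of_int \<bar>walk x \<omega> k\<bar>
      < real_of_int \<bar>walk x \<omega> (nat \<lfloor>real_of_ereal (?s \<omega>)\<rfloor>)\<bar> - scale N)
      \<in> measurable Steps (count_space UNIV)"
    by measurable
  have "(\<lambda>\<omega>. T_time N (walk x \<omega>) (Suc m)) \<in> borel_measurable Steps"
    unfolding T_time_Suc_eq Let_def by measurable
  then show ?case using S_time_walk_measurable by blast
qed

lemma T_time_walk_measurable [measurable]: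
  "(\<lambda>\<omega>. T_time N (walk x \<omega>) m) \<in> borel_measurable Steps"
  using T_time_S_time_walk_measurable by blast

lemma S_T_time_walk_measurable [measurable]:
  "(\<lambda>\<omega>. S_time N (walk x \<omega>) (T_time N (walk x \<omega>) m)) \<in> borel_measurable Steps"
  using T_time_S_time_walk_measurable by blast

lemma B_sum_walk_measurable [measurable]: "(\<lambda>\<omega>. B_sum N (walk x \<omega>) j) \<in> borel_measurable Steps"
  unfolding B_sum_def by measurable

end

definition stuck_set :: "nat \<Rightarrow> int \<Rightarrow> nat \<Rightarrow> nat \<Rightarrow> nat \<Rightarrow> (nat \<Rightarrow> int) set" where
  "stuck_set N x \<tau> m i = {\<omega>. T_time N (walk x \<omega>) m = ereal (real i) - 1 \<and>
      (\<forall>n<\<tau>. \<bar>real_of_int (walk x \<omega> (i + n))\<bar> \<le> 2 * scale N)}"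

definition no_dip_set :: "nat \<Rightarrow> int \<Rightarrow> real \<Rightarrow> nat \<Rightarrow> nat \<Rightarrow> (nat \<Rightarrow> int) set" where
  "no_dip_set N x sg m s = {\<omega>. S_time N (walk x \<omega>) (T_time N (walk x \<omega>) m) = ereal (real s) \<and>
      (\<forall>n. 0 \<le> scale N + sg * real_of_int (walk x \<omega> (s + n) - walk x \<omega> s))}"

lemma exits_within_if_not_stuck:
  assumes "\<And>i. \<omega> \<notin> stuck_set N x \<tau> m i"
  shows "exits_within N \<tau> (walk x \<omega>) m"
  using assms unfolding exits_within_def stuck_set_def by (force simp: not_le)

lemma dips_after_if_no_no_dip:
  assumes jumps: "\<And>i. \<bar>real_of_int (\<omega> i)\<bar> \<le> J" and J: "J \<le> 2 * scale N"
    and no_no_dip: "\<And>sg s. sg = 1 \<or> sg = -1 \<Longrightarrow> \<omega> \<notin> no_dip_set N x sg m s"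
  shows "dips_after N (walk x \<omega>) m"
  unfolding dips_after_def
proof (intro allI impI)
  fix s assume S: "S_time N (walk x \<omega>) (T_time N (walk x \<omega>) m) = ereal (real s)"
  then have "S_time N (walk x \<omega>) (T_time N (walk x \<omega>) m) \<noteq> \<infinity>" by simp
  then obtain s' where "S_time N (walk x \<omega>) (T_time N (walk x \<omega>) m) = ereal (real s')"
    and high: "2 * scale N < real_of_int \<bar>walk x \<omega> s'\<bar>"
    by (rule S_time_finiteD)
  then have "s' = s" using S by simp
  show "\<exists>k>s. real_of_int \<bar>walk x \<omega> k\<bar> < real_of_int \<bar>walk x \<omega> s\<bar> - scale N"
  proof (rule ccontr)
    assume "\<not> (\<exists>k>s. real_of_int \<bar>walk x \<omega> k\<bar> < real_of_int \<bar>walk x \<omega> s\<bar> - scale N)"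
    then have "\<And>k. s < k \<Longrightarrow> real_of_int \<bar>walk x \<omega> s\<bar> - scale N \<le> real_of_int \<bar>walk x \<omega> k\<bar>"
      by force
    with jumps J high \<open>s' = s\<close> obtain sg where "sg = 1 \<or> sg = -1"
      and "\<And>n. 0 \<le> scale N + sg * real_of_int (walk x \<omega> (s + n) - walk x \<omega> s)"
      by (elim walk_one_sided_if_no_dip) auto
    then show False using no_no_dip S unfolding no_dip_set_def by blast
  qed
qed

context iid_steps
begin

lemma stuck_set_eq: "stuck_set N x \<tau> m i = {\<omega>\<in>space Steps. T_time N (walk x \<omega>) m = ereal (real i) - 1 \<and>
    (\<forall>n<\<tau>. \<bar>real_of_int (walk x \<omega> (i + n))\<bar> \<le> 2 * scale N)}"
  by (simp add: stuck_set_def)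

lemma stuck_set_measurable [measurable]: "stuck_set N x \<tau> m i \<in> sets Steps"
  unfolding stuck_set_eq by measurable

lemma no_dip_set_eq: "no_dip_set N x sg m s = {\<omega>\<in>space Steps.
    S_time N (walk x \<omega>) (T_time N (walk x \<omega>) m) = ereal (real s) \<and>
    (\<forall>n. 0 \<le> scale N + sg * real_of_int (walk x \<omega> (s + n) - walk x \<omega> s))}"
  by (simp add: no_dip_set_def)

lemma no_dip_set_measurable [measurable]: "no_dip_set N x sg m s \<in> sets Steps"
proof -
  have "no_dip_set N x sg m s = {\<omega>\<in>space Steps. S_time N (walk x \<omega>) (T_time N (walk x \<omega>) m) = ereal (real s) \<and>
      (\<forall>n. 0 \<le> scale N + sg * (real_of_int (walk x \<omega> (s + n)) - real_of_int (walk x \<omega> s)))}"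
    by (simp add: no_dip_set_def)
  also have "\<dots> \<in> sets Steps" by measurable
  finally show ?thesis .
qed

text \<open>Restart at the time \<open>i\<close> where the search for \<open>S_m\<close> begins: \<open>\<tau>\<close> steps inside
  \<open>[-2N^(5/6), 2N^(5/6)]\<close> contain \<open>r\<close> consecutive blocks of length \<open>L\<close> with small increments.\<close>
lemma emeasure_stuck_set_le:
  assumes rL: "r * L < \<tau>"
  shows "emeasure Steps (stuck_set N x \<tau> m i) \<le>
     emeasure Steps {\<omega>\<in>space Steps. \<bar>real_of_int (psum L \<omega>)\<bar> \<le> 4 * scale N} ^ r *
     emeasure Steps {\<omega>\<in>space Steps. T_time N (walk x \<omega>) m = ereal (real i) - 1}"
  unfolding stuck_set_eq
proof (rule emeasure_restart_le[where i=i])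
  fix \<omega> \<omega>'
  assume a: "T_time N (walk x (comb_seq i \<omega> \<omega>')) m = ereal (real i) - 1 \<and>
    (\<forall>n<\<tau>. \<bar>real_of_int (walk x (comb_seq i \<omega> \<omega>') (i + n))\<bar> \<le> 2 * scale N)"
  then have "T_time N (walk x (comb_seq i \<omega> \<omega>')) m \<le> ereal (real i)"
    by (simp add: one_ereal_def)
  then have "T_time N (walk x \<omega>) m = T_time N (walk x (comb_seq i \<omega> \<omega>')) m"
    using T_time_cong_prefix[of i "walk x (comb_seq i \<omega> \<omega>')" "walk x \<omega>" N m] walk_comb_seq_le by blast
  then show "\<omega> \<in> {\<omega>\<in>space Steps. T_time N (walk x \<omega>) m = ereal (real i) - 1}" using a by simp
next
  fix \<omega>
  let ?y = "walk x \<omega> i"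
  have "{\<omega>'\<in>space Steps. T_time N (walk x (comb_seq i \<omega> \<omega>')) m = ereal (real i) - 1 \<and>
      (\<forall>n<\<tau>. \<bar>real_of_int (walk x (comb_seq i \<omega> \<omega>') (i + n))\<bar> \<le> 2 * scale N)}
    \<subseteq> {\<omega>'\<in>space Steps. \<forall>b<r. \<bar>real_of_int (block_incr L b \<omega>')\<bar> \<le> 4 * scale N}"
  proof safe
    fix \<omega>' b
    assume a: "\<forall>n<\<tau>. \<bar>real_of_int (walk x (comb_seq i \<omega> \<omega>') (i + n))\<bar> \<le> 2 * scale N" and b: "b < r"
    have inside: "n < \<tau> \<Longrightarrow> \<bar>real_of_int ?y + real_of_int (psum n \<omega>')\<bar> \<le> 2 * scale N" for n
      using a walk_comb_seq_add[of x i \<omega> \<omega>' n] by fastforce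
    have "Suc b * L \<le> r * L" using b by (intro mult_right_mono) auto
    then have "Suc b * L < \<tau>" and "b * L < \<tau>" using rL by (auto intro: le_less_trans)
    then show "\<bar>real_of_int (block_incr L b \<omega>')\<bar> \<le> 4 * scale N"
      using inside[of "Suc b * L"] inside[of "b * L"] by (simp add: block_incr_def)
  qed
  then have "emeasure Steps {\<omega>'\<in>space Steps. T_time N (walk x (comb_seq i \<omega> \<omega>')) m = ereal (real i) - 1 \<and>
      (\<forall>n<\<tau>. \<bar>real_of_int (walk x (comb_seq i \<omega> \<omega>') (i + n))\<bar> \<le> 2 * scale N)}
    \<le> emeasure Steps {\<omega>'\<in>space Steps. \<forall>b<r. \<bar>real_of_int (block_incr L b \<omega>')\<bar> \<le> 4 * scale N}"
    by (intro emeasure_mono) measurable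
  also have "\<dots> \<le> emeasure Steps {\<omega>\<in>space Steps. \<bar>real_of_int (psum L \<omega>)\<bar> \<le> 4 * scale N} ^ r"
    by (rule emeasure_block_incrs_le)
  finally show "emeasure Steps {\<omega>'\<in>space Steps. T_time N (walk x (comb_seq i \<omega> \<omega>')) m = ereal (real i) - 1 \<and>
      (\<forall>n<\<tau>. \<bar>real_of_int (walk x (comb_seq i \<omega> \<omega>') (i + n))\<bar> \<le> 2 * scale N)}
    \<le> emeasure Steps {\<omega>\<in>space Steps. \<bar>real_of_int (psum L \<omega>)\<bar> \<le> 4 * scale N} ^ r" .
qed measurable

lemma emeasure_UN_stuck_set_le:
  assumes rL: "r * L < \<tau>"
    and small: "emeasure Steps {\<omega>\<in>space Steps. \<bar>real_of_int (psum L \<omega>)\<bar> \<le> 4 * scale N} \<le> ennreal \<beta>"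
    and "\<beta> \<ge> 0"
  shows "emeasure Steps (\<Union>i. stuck_set N x \<tau> m i) \<le> ennreal (\<beta> ^ r)"
proof -
  let ?A = "\<lambda>i. {\<omega>\<in>space Steps. T_time N (walk x \<omega>) m = ereal (real i) - 1}"
  have "?A i \<in> sets Steps" for i by measurable
  then have A: "range ?A \<subseteq> sets Steps" by blast
  have disj: "disjoint_family ?A" by (auto simp: disjoint_family_on_def one_ereal_def)
  have small_r: "emeasure Steps {\<omega>\<in>space Steps. \<bar>real_of_int (psum L \<omega>)\<bar> \<le> 4 * scale N} ^ r
      \<le> ennreal (\<beta> ^ r)"
    using small \<open>\<beta> \<ge> 0\<close> by (simp add: ennreal_power[symmetric] power_mono)
  have "emeasure Steps (\<Union>i. stuck_set N x \<tau> m i) \<le> (\<Sum>i. emeasure Steps (stuck_set N x \<tau> m i))"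
    by (rule emeasure_subadditive_countably) auto
  also have "\<dots> \<le> (\<Sum>i. ennreal (\<beta> ^ r) * emeasure Steps (?A i))"
    by (intro suminf_le summableI order.trans[OF emeasure_stuck_set_le[OF rL]] mult_right_mono small_r)
      auto
  also have "\<dots> = ennreal (\<beta> ^ r) * emeasure Steps (\<Union>i. ?A i)"
    using suminf_emeasure[OF A disj] by (simp add: ennreal_suminf_cmult)
  also have "\<dots> \<le> ennreal (\<beta> ^ r)"
    using mult_left_mono[OF steps.measure_le_1, of "ennreal (\<beta> ^ r)"] by simp
  finally show ?thesis .
qed

end

context sym_finite_steps
begin

lemma emeasure_no_dip_set_eq_0:
  assumes pos: "mom2 > 0" and sg: "sg = 1 \<or> sg = -1"
  shows "emeasure Steps (no_dip_set N x sg m s) = 0"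
proof -
  let ?A = "{\<omega>\<in>space Steps. S_time N (walk x \<omega>) (T_time N (walk x \<omega>) m) = ereal (real s)}"
  have "emeasure Steps (no_dip_set N x sg m s) \<le> 0 * emeasure Steps ?A"
    unfolding no_dip_set_eq
  proof (rule emeasure_restart_le[where i=s])
    fix \<omega> \<omega>'
    assume a: "S_time N (walk x (comb_seq s \<omega> \<omega>')) (T_time N (walk x (comb_seq s \<omega> \<omega>')) m) = ereal (real s)
      \<and> (\<forall>n. 0 \<le> scale N + sg * real_of_int (walk x (comb_seq s \<omega> \<omega>') (s + n) - walk x (comb_seq s \<omega> \<omega>') s))"
    then have "S_time N (walk x \<omega>) (T_time N (walk x \<omega>) m)
        = S_time N (walk x (comb_seq s \<omega> \<omega>')) (T_time N (walk x (comb_seq s \<omega> \<omega>')) m)"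
      using S_T_time_cong_prefix[of s "walk x (comb_seq s \<omega> \<omega>')" "walk x \<omega>" N m] walk_comb_seq_le
      by auto
    then show "\<omega> \<in> ?A" using a by simp
  next
    fix \<omega>
    have "{\<omega>'\<in>space Steps.
        S_time N (walk x (comb_seq s \<omega> \<omega>')) (T_time N (walk x (comb_seq s \<omega> \<omega>')) m) = ereal (real s)
      \<and> (\<forall>n. 0 \<le> scale N + sg * real_of_int (walk x (comb_seq s \<omega> \<omega>') (s + n) - walk x (comb_seq s \<omega> \<omega>') s))}
      \<subseteq> {\<omega>'\<in>space Steps. \<forall>n. 0 \<le> scale N + sg * real_of_int (psum n \<omega>')}"
      using walk_comb_seq_add[of x s \<omega>] walk_comb_seq_le[of s s x \<omega>] by auto
    then have "emeasure Steps {\<omega>'\<in>space Steps.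
        S_time N (walk x (comb_seq s \<omega> \<omega>')) (T_time N (walk x (comb_seq s \<omega> \<omega>')) m) = ereal (real s)
      \<and> (\<forall>n. 0 \<le> scale N + sg * real_of_int (walk x (comb_seq s \<omega> \<omega>') (s + n) - walk x (comb_seq s \<omega> \<omega>') s))}
      \<le> emeasure Steps {\<omega>'\<in>space Steps. \<forall>n. 0 \<le> scale N + sg * real_of_int (psum n \<omega>')}"
      by (intro emeasure_mono) measurable
    also have "\<dots> = 0" by (rule emeasure_never_crosses_eq_0[OF pos sg])
    finally show "emeasure Steps {\<omega>'\<in>space Steps.
        S_time N (walk x (comb_seq s \<omega> \<omega>')) (T_time N (walk x (comb_seq s \<omega> \<omega>')) m) = ereal (real s)
      \<and> (\<forall>n. 0 \<le> scale N + sg * real_of_int (walk x (comb_seq s \<omega> \<omega>') (s + n) - walk x (comb_seq s \<omega> \<omega>') s))}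
      \<le> 0" .
  qed (use no_dip_set_measurable[of N x sg m s] in \<open>simp_all only: no_dip_set_eq\<close>, measurable)
  then show ?thesis by simp
qed

end

lemma (in iid_steps) AE_steps_bounded:
  assumes "\<And>z. J < \<bar>real_of_int z\<bar> \<Longrightarrow> pmf p z = 0"
  shows "AE \<omega> in Steps. \<forall>i. \<bar>real_of_int (\<omega> i)\<bar> \<le> J"
proof -
  have "AE z in measure_pmf p. \<bar>real_of_int z\<bar> \<le> J"
    using assms by (auto simp: AE_measure_pmf_iff set_pmf_iff) (meson not_le)
  then show ?thesis by (auto intro: steps.AE_component simp: AE_all_countable)
qed

context sym_finite_steps
begin

definition excursion_fails :: "nat \<Rightarrow> int \<Rightarrow> nat \<Rightarrow> nat \<Rightarrow> (nat \<Rightarrow> int) set" where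
  "excursion_fails N x \<tau> m =
     (\<Union>i. stuck_set N x \<tau> m i) \<union> (\<Union>s. no_dip_set N x 1 m s) \<union> (\<Union>s. no_dip_set N x (-1) m s)"

lemma excursion_fails_measurable [measurable]: "excursion_fails N x \<tau> m \<in> sets Steps"
  unfolding excursion_fails_def by measurable

lemma emeasure_excursion_fails_le:
  assumes pos: "mom2 > 0" and rL: "r * L < \<tau>"
    and small: "emeasure Steps {\<omega>\<in>space Steps. \<bar>real_of_int (psum L \<omega>)\<bar> \<le> 4 * scale N} \<le> ennreal \<beta>"
    and "\<beta> \<ge> 0"
  shows "emeasure Steps (excursion_fails N x \<tau> m) \<le> ennreal (\<beta> ^ r)"
proof -
  have no_dip_null: "emeasure Steps (\<Union>s. no_dip_set N x sg m s) = 0" if "sg = 1 \<or> sg = -1" for sg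
    using emeasure_no_dip_set_eq_0[OF pos that]
    by (intro emeasure_UN_eq_0) (auto simp: null_sets_def)
  have "emeasure Steps (excursion_fails N x \<tau> m) \<le> emeasure Steps (\<Union>i. stuck_set N x \<tau> m i)
      + emeasure Steps (\<Union>s. no_dip_set N x 1 m s) + emeasure Steps (\<Union>s. no_dip_set N x (-1) m s)"
    unfolding excursion_fails_def
    by (intro order.trans[OF emeasure_subadditive] add_right_mono emeasure_subadditive) auto
  also have "\<dots> \<le> ennreal (\<beta> ^ r)"
    using no_dip_null emeasure_UN_stuck_set_le[OF rL small \<open>\<beta> \<ge> 0\<close>] by simp
  finally show ?thesis .
qed

text \<open>Outside a null set of large jumps, if every excursion \<open>m \<le> j\<close> succeeds then
  \<open>B_j \<le> (j + 1) \<tau>\<close>.\<close>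
lemma emeasure_B_sum_gt_le:
  assumes pos: "mom2 > 0"
    and bounded: "\<And>z. J < \<bar>real_of_int z\<bar> \<Longrightarrow> pmf p z = 0" and J: "J \<le> 2 * scale N"
    and small: "emeasure Steps {\<omega>\<in>space Steps. \<bar>real_of_int (psum L \<omega>)\<bar> \<le> 4 * scale N} \<le> ennreal \<beta>"
    and "\<beta> \<ge> 0" and rL: "r * L < \<tau>"
  shows "emeasure Steps {\<omega>\<in>space Steps. ereal (real (Suc j) * real \<tau>) < B_sum N (walk x \<omega>) j}
     \<le> ennreal (real (Suc j) * \<beta> ^ r)"
proof -
  have "AE \<omega> in Steps. \<forall>i. \<bar>real_of_int (\<omega> i)\<bar> \<le> J"
    using bounded by (rule AE_steps_bounded)
  then have "AE \<omega> in Steps. ereal (real (Suc j) * real \<tau>) < B_sum N (walk x \<omega>) j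
      \<longrightarrow> \<omega> \<in> (\<Union>m\<in>{..j}. excursion_fails N x \<tau> m)"
  proof eventually_elim
    case (elim \<omega>)
    show ?case
    proof (rule impI, rule ccontr)
      assume "\<omega> \<notin> (\<Union>m\<in>{..j}. excursion_fails N x \<tau> m)"
      then have "exits_within N \<tau> (walk x \<omega>) m \<and> dips_after N (walk x \<omega>) m" if "m \<le> j" for m
        using that elim J
        by (auto intro!: exits_within_if_not_stuck dips_after_if_no_no_dip simp: excursion_fails_def)
      then have "B_sum N (walk x \<omega>) j \<le> ereal (real (Suc j) * real \<tau>)"
        by (rule B_sum_le_if_exits_within_dips_after)
      moreover assume "ereal (real (Suc j) * real \<tau>) < B_sum N (walk x \<omega>) j"
      ultimately show False by simp
    qed
  qed
  then have "emeasure Steps {\<omega>\<in>space Steps. ereal (real (Suc j) * real \<tau>) < B_sum N (walk x \<omega>) j}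
      \<le> emeasure Steps (\<Union>m\<in>{..j}. excursion_fails N x \<tau> m)"
    by (intro emeasure_mono_AE) auto
  also have "\<dots> \<le> (\<Sum>m\<le>j. emeasure Steps (excursion_fails N x \<tau> m))"
    by (rule emeasure_subadditive_finite) auto
  also have "\<dots> \<le> (\<Sum>m\<le>j. ennreal (\<beta> ^ r))"
    by (intro sum_mono emeasure_excursion_fails_le[OF pos rL small \<open>\<beta> \<ge> 0\<close>])
  also have "\<dots> = ennreal (real (Suc j) * \<beta> ^ r)"
    using \<open>\<beta> \<ge> 0\<close> by (simp add: ennreal_mult ennreal_of_nat_eq_real_of_nat)
  finally show ?thesis .
qed

end

text \<open>The block counts behind the final estimate: \<open>j + 1 \<approx> N^(2/9)\<close> excursions of length
  \<open>\<tau> \<approx> N^(13/18)\<close>, each containing \<open>r \<approx> N^(1/18)\<close> blocks of length \<open>L \<approx> D N^(2/3)\<close>.\<close>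
lemma block_parameters:
  fixes n D :: real
  assumes n: "n \<ge> 2" and D: "D > 0"
    and large: "8 * D \<le> n powr (1/18)" "4 \<le> n powr (13/18)" "1 \<le> D * n powr (2/3)"
    and j_def: "j = nat \<lfloor>n powr (2/9)\<rfloor>"
    and \<tau>_def: "\<tau> = nat \<lfloor>2 * n powr (17/18) / real (Suc j)\<rfloor>"
    and L_def: "L = nat \<lceil>D * n powr (2/3)\<rceil>"
    and r_def: "r = (\<tau> - 1) div L"
  shows "real (Suc j) * real \<tau> \<le> 2 * n powr (17/18)" and "real (Suc j) \<le> 2 * n powr (2/9)"
    and "r * L < \<tau>" and "D * n powr (2/3) \<le> real L" and "n powr (1/18) / (8 * D) \<le> real r"
proof -
  have "n powr (2/9) \<ge> 1" using n by (simp add: ge_one_powr_ge_zero)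
  moreover have "real j \<le> n powr (2/9)" unfolding j_def by simp
  ultimately show j: "real (Suc j) \<le> 2 * n powr (2/9)" by simp
  have nonneg: "2 * n powr (17/18) / real (Suc j) \<ge> 0" by simp
  then have "real \<tau> \<le> 2 * n powr (17/18) / real (Suc j)" unfolding \<tau>_def by simp
  then show "real (Suc j) * real \<tau> \<le> 2 * n powr (17/18)"
    by (simp add: field_simps del: of_nat_Suc)
  have "2 * n powr (17/18) / (2 * n powr (2/9)) \<le> 2 * n powr (17/18) / real (Suc j)"
    using j n by (intro divide_left_mono) auto
  also have "2 * n powr (17/18) / (2 * n powr (2/9)) = n powr (13/18)"
    using n by (simp add: powr_diff[symmetric])
  finally have "real \<tau> \<ge> n powr (13/18) - 1" unfolding \<tau>_def using nonneg by linarith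
  then have "real \<tau> \<ge> 1" using large(2) by simp
  then have "\<tau> \<ge> 1" by simp
  then have tau: "real (\<tau> - 1) \<ge> n powr (13/18) / 2"
    using \<open>real \<tau> \<ge> n powr (13/18) - 1\<close> large(2) by (simp add: of_nat_diff)
  show L_ge: "D * n powr (2/3) \<le> real L" unfolding L_def by linarith
  have L_le: "real L \<le> 2 * D * n powr (2/3)" unfolding L_def using large(3) by linarith
  have "L \<ge> 1" using L_ge large(3) by simp
  show "r * L < \<tau>"
    using \<open>\<tau> \<ge> 1\<close> div_times_less_eq_dividend[of "\<tau> - 1" L] unfolding r_def by linarith
  have "\<tau> - 1 = r * L + (\<tau> - 1) mod L" unfolding r_def by simp
  moreover have "(\<tau> - 1) mod L < L" using \<open>L \<ge> 1\<close> by simp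
  ultimately have "\<tau> - 1 < Suc r * L" by simp
  then have "real (\<tau> - 1) < real (Suc r * L)" by (simp only: of_nat_less_iff)
  then have "real (\<tau> - 1) < (real r + 1) * real L" by (simp add: algebra_simps)
  then have r_gt: "real r > real (\<tau> - 1) / real L - 1" using \<open>L \<ge> 1\<close> by (simp add: field_simps)
  have "(n powr (13/18) / 2) / (2 * D * n powr (2/3)) \<le> real (\<tau> - 1) / real L"
    using tau L_le \<open>L \<ge> 1\<close> D n by (intro frac_le) auto
  also have "(n powr (13/18) / 2) / (2 * D * n powr (2/3)) = (n powr (13/18) / n powr (2/3)) / (4 * D)"
    by (simp add: field_simps)
  also have "n powr (13/18) / n powr (2/3) = n powr (1/18)"
    by (simp add: powr_diff[symmetric])
  finally have "real r > n powr (1/18) / (4 * D) - 1" using r_gt by linarith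
  moreover have "n powr (1/18) / (8 * D) \<ge> 1" using large(1) D by simp
  ultimately show "n powr (1/18) / (8 * D) \<le> real r" using D by (simp add: field_simps)
qed

lemma poly_times_geometric_bounded: "\<exists>C. \<forall>k. real k ^ 10 * (31/32::real) ^ k \<le> C"
proof -
  have "(\<lambda>k::nat. real k ^ 10 * (31/32::real) ^ k) \<longlonglongrightarrow> 0" by real_asymp
  then have "Bseq (\<lambda>k::nat. real k ^ 10 * (31/32::real) ^ k)"
    by (rule convergent_imp_Bseq[OF convergentI])
  then show ?thesis by (auto simp: Bseq_def)
qed

lemma count_times_geometric_le:
  fixes n D C y :: real
  assumes C: "\<And>k. real k ^ 10 * (31/32::real) ^ k \<le> C" and n: "n > 0"
    and y_def: "y = n powr (1/18) / (8 * D)" and y: "1 \<le> y" "y \<le> real r"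
    and j: "real (Suc j) \<le> 2 * n powr (2/9)"
  shows "real (Suc j) * (31/32) ^ r \<le> 2 * C * (8 * D) ^ 10 * n powr (-1/3)"
proof -
  have "C \<ge> 0" using C[of 0] by simp
  have "(31/32) ^ r \<le> C / real r ^ 10"
    using C[of r] y by (simp add: field_simps)
  also have "\<dots> \<le> C / y ^ 10"
  proof -
    have "y ^ 10 \<le> real r ^ 10" using y by (intro power_mono) auto
    then show ?thesis using y \<open>C \<ge> 0\<close> by (intro divide_left_mono) auto
  qed
  also have "y ^ 10 = n powr (10/18) / (8 * D) ^ 10"
    using n by (simp add: y_def power_divide powr_power)
  finally have "(31/32) ^ r \<le> C * (8 * D) ^ 10 / n powr (10/18)" by simp
  then have "real (Suc j) * (31/32) ^ r \<le> (2 * n powr (2/9)) * (C * (8 * D) ^ 10 / n powr (10/18))"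
    using j by (intro mult_mono) auto
  also have "\<dots> = 2 * C * (8 * D) ^ 10 * (n powr (2/9) / n powr (10/18))" by simp
  also have "n powr (2/9) / n powr (10/18) = n powr (-1/3)"
    by (simp add: powr_diff[symmetric])
  finally show ?thesis .
qed

context sym_finite_steps
begin

lemma mom2_eq_infsum: "mom2 = (\<Sum>\<^sub>\<infinity>z. (real_of_int z)\<^sup>2 * pmf p z)"
proof -
  have "mom2 = (\<Sum>z\<in>set_pmf p. (real_of_int z)\<^sup>2 * pmf p z)"
    unfolding mom2_def by (rule integral_measure_pmf_real[OF finite_support]) auto
  also have "\<dots> = (\<Sum>\<^sub>\<infinity>z\<in>set_pmf p. (real_of_int z)\<^sup>2 * pmf p z)"
    using finite_support by simp
  also have "\<dots> = (\<Sum>\<^sub>\<infinity>z. (real_of_int z)\<^sup>2 * pmf p z)"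
    by (rule infsum_cong_neutral) (auto simp: set_pmf_iff)
  finally show ?thesis .
qed

lemma mom4_le_if_bounded:
  assumes "\<And>z. J < \<bar>real_of_int z\<bar> \<Longrightarrow> pmf p z = 0"
  shows "mom4 \<le> J\<^sup>2 * mom2"
proof -
  have "mom4 \<le> measure_pmf.expectation p (\<lambda>z. J\<^sup>2 * (real_of_int z)\<^sup>2)"
    unfolding mom4_def
  proof (rule integral_mono_AE)
    show "AE z in measure_pmf p. (real_of_int z) ^ 4 \<le> J\<^sup>2 * (real_of_int z)\<^sup>2"
    proof (subst AE_measure_pmf_iff, intro ballI)
      fix z assume "z \<in> set_pmf p"
      then have "\<bar>real_of_int z\<bar> \<le> J" using assms by (meson not_le set_pmf_iff)
      then have "(real_of_int z)\<^sup>2 \<le> J\<^sup>2" by (metis abs_ge_zero power2_abs power_mono)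
      then show "(real_of_int z) ^ 4 \<le> J\<^sup>2 * (real_of_int z)\<^sup>2"
        by (metis mult_right_mono power2_eq_square power4_eq_xxxx zero_le_power2 mult.assoc)
    qed
  qed (auto intro: integrable_steps)
  then show ?thesis unfolding mom2_def by simp
qed

lemma emeasure_psum_small_le:
  assumes V: "real L * mom2 > 0" and fourth: "real L * mom4 \<le> (real L * mom2)\<^sup>2"
    and t: "2 * t \<le> sqrt (real L * mom2)"
  shows "emeasure Steps {\<omega>\<in>space Steps. \<bar>real_of_int (psum L \<omega>)\<bar> \<le> t} \<le> ennreal (31/32)"
proof -
  let ?A = "{w::int. \<bar>real_of_int w\<bar> \<le> t}"
  have "measure_pmf.prob (conv_pow p L) {w. \<bar>real_of_int w\<bar> > sqrt (real L * mom2) / 2}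
      \<le> measure_pmf.prob (conv_pow p L) (UNIV - ?A)"
    using t by (intro measure_pmf.finite_measure_mono) auto
  then have "measure_pmf.prob (conv_pow p L) (UNIV - ?A) \<ge> 1/32"
    using conv_pow_anticoncentration[OF V fourth] by linarith
  then have "measure_pmf.prob (conv_pow p L) ?A \<le> 31/32"
    using measure_pmf.prob_compl[of ?A "conv_pow p L"] by (simp add: Compl_eq_Diff_UNIV)
  moreover have "emeasure Steps {\<omega>\<in>space Steps. \<bar>real_of_int (psum L \<omega>)\<bar> \<le> t}
      = ennreal (measure_pmf.prob (conv_pow p L) ?A)"
    using emeasure_psum[of L ?A] by (simp add: measure_pmf.emeasure_eq_measure)
  ultimately show ?thesis by (simp add: ennreal_leI)
qed

text \<open>With \<open>L \<ge> D N^(2/3)\<close> and variance at least \<open>\<sigma>\<^sup>2 N / 4\<close>, a block increment has standard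
  deviation at least \<open>8 N^(5/6)\<close>, so it is rarely below \<open>4 N^(5/6)\<close>.\<close>
lemma prob_B_sum_large_le:
  fixes N :: nat and x :: int and \<sigma> D C J :: real
  assumes N: "N \<ge> 2" and \<sigma>: "\<sigma> > 0" and mom2_ge: "mom2 \<ge> \<sigma>\<^sup>2 / 4 * real N"
    and D: "D = 256 / \<sigma>\<^sup>2"
    and bounded: "\<And>z. J < \<bar>real_of_int z\<bar> \<Longrightarrow> pmf p z = 0" and J: "J \<le> 2 * scale N"
    and large: "8 * D \<le> real N powr (1/18)" "4 \<le> real N powr (13/18)" "1 \<le> D * real N powr (2/3)"
    and C: "\<And>k. real k ^ 10 * (31/32::real) ^ k \<le> C"
  defines "E \<equiv> {\<omega>\<in>space Steps. B_sum N (walk x \<omega>) (nat \<lfloor>real N powr (2/9)\<rfloor>)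
                               > ereal (2 * real N powr (17/18))}"
  shows "E \<in> sets Steps \<and> measure Steps E \<le> 2 * C * (8 * D) ^ 10 * real N powr (-1/3)"
proof -
  define n where "n = real N"
  define j where "j = nat \<lfloor>n powr (2/9)\<rfloor>"
  define \<tau> where "\<tau> = nat \<lfloor>2 * n powr (17/18) / real (Suc j)\<rfloor>"
  define L where "L = nat \<lceil>D * n powr (2/3)\<rceil>"
  define r where "r = (\<tau> - 1) div L"
  have n: "n \<ge> 2" using N by (simp add: n_def)
  have D0: "D > 0" using D \<sigma> by simp
  note params = block_parameters[OF n D0 large[folded n_def] j_def \<tau>_def L_def r_def]
  have "real L * mom2 \<ge> (D * n powr (2/3)) * (\<sigma>\<^sup>2 / 4 * n)"
    using params(4) mom2_ge D0 by (intro mult_mono) (auto simp: n_def)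
  also have "(D * n powr (2/3)) * (\<sigma>\<^sup>2 / 4 * n) = 64 * (n powr (2/3) * n powr 1)"
    using \<sigma> n by (simp add: D field_simps)
  also have "n powr (2/3) * n powr 1 = n powr (5/3)" by (subst powr_add[symmetric]) simp
  finally have Lmom2: "real L * mom2 \<ge> 64 * n powr (5/3)" .
  have scale_sq: "(scale N)\<^sup>2 = n powr (5/3)"
    using powr_power[of n "5/6" 2] n by (simp add: n_def)
  have V: "real L * mom2 > 0" using Lmom2 n by (smt (verit) powr_gt_zero)
  obtain z where "z \<in> set_pmf p" using set_pmf_not_empty by fast
  then have "\<bar>real_of_int z\<bar> \<le> J" using bounded by (meson not_le set_pmf_iff)
  then have "J\<^sup>2 \<le> (2 * scale N)\<^sup>2" using J by (intro power_mono) auto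
  then have "J\<^sup>2 \<le> 4 * n powr (5/3)" using scale_sq by (simp add: power_mult_distrib)
  then have "J\<^sup>2 \<le> real L * mom2" using Lmom2 powr_ge_zero[of n "5/3"] by linarith
  then have "real L * mom4 \<le> real L * (real L * mom2 * mom2)"
    using mom4_le_if_bounded[OF bounded] V mom2_nonneg
    by (intro mult_left_mono) (auto intro: order.trans mult_right_mono)
  then have fourth: "real L * mom4 \<le> (real L * mom2)\<^sup>2" by (simp add: power2_eq_square mult_ac)
  have "(8 * scale N)\<^sup>2 \<le> real L * mom2" using Lmom2 scale_sq by (simp add: power_mult_distrib)
  then have "2 * (4 * scale N) \<le> sqrt (real L * mom2)" by (simp add: real_le_rsqrt)
  then have "emeasure Steps {\<omega>\<in>space Steps. \<bar>real_of_int (psum L \<omega>)\<bar> \<le> 4 * scale N} \<le> ennreal (31/32)"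
    by (rule emeasure_psum_small_le[OF V fourth])
  then have main: "emeasure Steps {\<omega>\<in>space Steps. ereal (real (Suc j) * real \<tau>) < B_sum N (walk x \<omega>) j}
      \<le> ennreal (real (Suc j) * (31/32) ^ r)"
    using mom2_ge V bounded J params(3)
    by (intro emeasure_B_sum_gt_le) (auto simp: zero_less_mult_iff)
  have "E \<subseteq> {\<omega>\<in>space Steps. ereal (real (Suc j) * real \<tau>) < B_sum N (walk x \<omega>) j}"
    using params(1) unfolding E_def j_def n_def by (auto intro: le_less_trans[rotated])
  then have "emeasure Steps E \<le> ennreal (real (Suc j) * (31/32) ^ r)"
    by (intro order.trans[OF emeasure_mono main]) measurable
  have E: "E \<in> sets Steps" unfolding E_def by measurable
  from \<open>emeasure Steps E \<le> _\<close> have "measure Steps E \<le> real (Suc j) * (31/32) ^ r"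
    by (simp add: steps.emeasure_eq_measure ennreal_le_iff)
  also have "\<dots> \<le> 2 * C * (8 * D) ^ 10 * real N powr (-1/3)"
    using params(5,2) large(1) D0 N unfolding n_def
    by (intro count_times_geometric_le[OF C _ refl]) auto
  finally show ?thesis using E by simp
qed

end

lemma finite_set_pmf_if_bounded:
  fixes q :: "int pmf"
  assumes "\<And>z. J < \<bar>real_of_int z\<bar> \<Longrightarrow> pmf q z = 0"
  shows "finite (set_pmf q)"
proof (rule finite_subset)
  show "set_pmf q \<subseteq> {- \<lceil>J\<rceil>..\<lceil>J\<rceil>}"
  proof
    fix z assume "z \<in> set_pmf q"
    then have "\<bar>real_of_int z\<bar> \<le> J" using assms by (meson not_le set_pmf_iff)
    then show "z \<in> {- \<lceil>J\<rceil>..\<lceil>J\<rceil>}" by simp linarith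
  qed
qed simp

lemma prob_B_sum_large_le_pmf:
  fixes q :: "int pmf" and N :: nat and x :: int and s \<sigma> D C J :: real
  assumes sym: "\<And>z. pmf q z = pmf q (- z)"
    and var: "(\<Sum>\<^sub>\<infinity>z. (real_of_int z)\<^sup>2 * pmf q z) = s\<^sup>2 * real N" and s: "\<sigma> / 2 < s" and \<sigma>: "\<sigma> > 0"
    and support: "\<And>z. real_of_int \<bar>z\<bar> > J \<Longrightarrow> pmf q z = 0" and J: "J \<le> 2 * scale N"
    and N: "N \<ge> 2" and D: "D = 256 / \<sigma>\<^sup>2"
    and large: "8 * D \<le> real N powr (1/18)" "4 \<le> real N powr (13/18)" "1 / D \<le> real N powr (2/3)"
    and C: "\<And>k. real k ^ 10 * (31/32::real) ^ k \<le> C"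
  shows "let M = PiM UNIV (\<lambda>_::nat. measure_pmf q);
           E = {xi \<in> space M. B_sum N (walk x xi) (nat \<lfloor>real N powr (2/9)\<rfloor>)
                              > ereal (2 * real N powr (17/18))}
         in E \<in> sets M \<and> measure M E \<le> 2 * C * (8 * D) ^ 10 * real N powr (-1/3)"
proof -
  have bounded: "\<And>z. J < \<bar>real_of_int z\<bar> \<Longrightarrow> pmf q z = 0" using support by simp
  interpret sym_finite_steps q
    using finite_set_pmf_if_bounded[OF bounded] sym by unfold_locales simp_all
  have "(\<sigma> / 2)\<^sup>2 \<le> s\<^sup>2" using s \<sigma> by (intro power_mono) auto
  then have mom2: "mom2 \<ge> \<sigma>\<^sup>2 / 4 * real N"
    unfolding mom2_eq_infsum var by (intro mult_right_mono) (auto simp: power_divide)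
  have one: "1 \<le> D * real N powr (2/3)" using large(3) \<sigma> by (simp add: D field_simps)
  show ?thesis
    unfolding Let_def by (rule prob_B_sum_large_le[OF N \<sigma> mom2 D bounded J large(1,2) one C])
qed

theorem proposition2:
  fixes q :: "nat \<Rightarrow> int pmf" and x :: "nat \<Rightarrow> int" and \<sigma>N :: "nat \<Rightarrow> real"
    and \<sigma> h c C B :: real and N0 :: nat
  assumes sym: "\<And>N z. N \<ge> N0 \<Longrightarrow> pmf (q N) z = pmf (q N) (- z)"
    and var: "\<And>N. N \<ge> N0 \<Longrightarrow>
               (\<Sum>\<^sub>\<infinity>z. (real_of_int z)\<^sup>2 * pmf (q N) z) = (\<sigma>N N)\<^sup>2 * real N"
    and sigma_lim: "\<sigma>N \<longlonglongrightarrow> \<sigma>" and sigma_pos: "0 < \<sigma>"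
    and h_pos: "h > 0"
    and lower: "\<And>N z. N \<ge> N0 \<Longrightarrow> real_of_int \<bar>z\<bar> \<le> sqrt (real N) \<Longrightarrow>
                  pmf (q N) z \<ge> h / sqrt (real N)"
    and c_pos: "c > 0" and C_pos: "C > 0"
    and upper: "\<And>N z. N \<ge> N0 \<Longrightarrow>
                  pmf (q N) z \<le> C * exp (- c * real_of_int \<bar>z\<bar> / sqrt (real N))"
    and support: "\<And>N z. N \<ge> N0 \<Longrightarrow> real_of_int \<bar>z\<bar> > B * sqrt (real N) * ln (real N) \<Longrightarrow>
                  pmf (q N) z = 0"
    and start: "\<And>N. N \<ge> N0 \<Longrightarrow> real_of_int (x N) \<ge> 2 * real N powr (5/6)"
  shows "\<exists>K. \<forall>\<^sub>F N in sequentially.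
     (let M = PiM UNIV (\<lambda>_::nat. measure_pmf (q N));
          E = {xi \<in> space M. B_sum N (walk (x N) xi) (nat \<lfloor>real N powr (2/9)\<rfloor>)
                              > ereal (2 * real N powr (17/18))}
      in E \<in> sets M \<and> measure M E \<le> K * real N powr (-1/3))"
proof -
  obtain K where K: "\<And>k. real k ^ 10 * (31/32::real) ^ k \<le> K"
    using poly_times_geometric_bounded by blast
  define D where "D = 256 / \<sigma>\<^sup>2"
  have "\<forall>\<^sub>F N in sequentially. N0 \<le> N \<and> 2 \<le> N"
    by (simp add: eventually_conj eventually_ge_at_top)
  moreover have "\<forall>\<^sub>F N in sequentially. \<sigma> / 2 < \<sigma>N N"
    using sigma_lim sigma_pos by (intro order_tendstoD(1)) auto
  moreover have "\<forall>\<^sub>F N in sequentially. B * sqrt (real N) * ln (real N) < 2 * real N powr (5/6)"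
    by real_asymp
  moreover have "\<forall>\<^sub>F N in sequentially. 8 * D \<le> real N powr (1/18)" by real_asymp
  moreover have "\<forall>\<^sub>F N in sequentially. 4 \<le> real N powr (13/18)" by real_asymp
  moreover have "\<forall>\<^sub>F N in sequentially. 1 / D \<le> real N powr (2/3)" by real_asymp
  ultimately have "\<forall>\<^sub>F N in sequentially.
     (let M = PiM UNIV (\<lambda>_::nat. measure_pmf (q N));
          E = {xi \<in> space M. B_sum N (walk (x N) xi) (nat \<lfloor>real N powr (2/9)\<rfloor>)
                              > ereal (2 * real N powr (17/18))}
      in E \<in> sets M \<and> measure M E \<le> 2 * K * (8 * D) ^ 10 * real N powr (-1/3))"
  proof eventually_elim
    case (elim N)
    then have "N0 \<le> N" and "2 \<le> N" by simp_all
    show ?case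
      by (rule prob_B_sum_large_le_pmf[OF sym[OF \<open>N0 \<le> N\<close>] var[OF \<open>N0 \<le> N\<close>] elim(2) sigma_pos
          support[OF \<open>N0 \<le> N\<close>] less_imp_le[OF elim(3)] \<open>2 \<le> N\<close> D_def elim(4-6) K])
  qed
  then show ?thesis by blast
qed

end
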